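(* Let $\Gamma$ and $\Gamma'$ be two quantum covariance matrices of size $2S\times 2S$ having the same eigenspectrum $\Lambda=(\lambda_i)_{i=1}^{2S}$ (eigenvalues listed with multiplicity in non-ascending order). Suppose that $\Lambda$ satisfies the $(S-1)$-pure unique pairing condition. Then $\Gamma'$ is an orthogonal-symplectic transform of $\Gamma$, i.e. there exists $W\in\mathrm{SpO}(2S,\mathbb{R})$ with $\Gamma'=W\Gamma W^T$.
   Context: Fix an integer $S\ge 1$. Coordinates of $\mathbb{R}^{2S}$ are ordered as $(q_1,p_1,\dots,q_S,p_S)$; coordinates $2i-1$ and $2i$ form the $i$-th mode (a pair of conjugate coordinates). Let $\Omega=\bigoplus_{i=1}^S\begin{pmatrix}0&1\\-1&0\end{pmatrix}$. A real $2S\times 2S$ matrix $A$ is symplectic if $A^T\Omega A=\Omega$. $\mathrm{SpO}(2S,\mathbb{R})$ denotes the group of real $2S\times2S$ matrices that are both orthogonal and symplectic. A quantum covariance matrix (quantum CM) is a real symmetric positive-definite $2S\times 2S$ matrix $\Gamma$ such that the Hermitian matrix $\Gamma+i\Omega$ is positive semidefinite. Let $\Lambda=(\lambda_i)_{i=1}^{2S}$ be the eigenvalues of a quantum CM in non-ascending order. Let $G(\Lambda)$ be the graph with vertex set $\{1,\dots,2S\}$ and edge set $\{\{i,j\}: i<j,\ \lambda_i\lambda_j\ge 1\}$; an edge $\{i,j\}$ is pure if $\lambda_i\lambda_j=1$. $\Lambda$ satisfies the unique pairing condition if $G(\Lambda)$ has a unique perfect matching up to permutations of vertices carrying equal eigenvalues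 (i.e. for any two perfect matchings $M,M'$ there is a permutation $\pi$ of $\{1,\dots,2S\}$ with $\lambda_{\pi(i)}=\lambda_i$ for all $i$ mapping $M$ onto $M'$). $\Lambda$ satisfies the $t$-pure unique pairing condition if it satisfies the unique pairing condition and at least $t$ of the $S$ edges of this perfect matching are pure. *)

theory Defs
  imports "Jordan_Normal_Form.Char_Poly"
begin

(* Coordinates are 0-indexed: index 2k and 2k+1 (k < S) form the (k+1)-th mode (q_{k+1}, p_{k+1}). *)

definition Omega :: "nat \<Rightarrow> real mat" where
  "Omega S = mat (2*S) (2*S) (\<lambda>(i,j).
      if even i \<and> j = i + 1 then 1
      else if odd i \<and> i = j + 1 then -1 else 0)"

definition symplectic_mat :: "nat \<Rightarrow> real mat \<Rightarrow> bool" where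
  "symplectic_mat S A \<longleftrightarrow> A \<in> carrier_mat (2*S) (2*S) \<and>
     transpose_mat A * Omega S * A = Omega S"

definition orthogonal_real_mat :: "nat \<Rightarrow> real mat \<Rightarrow> bool" where
  "orthogonal_real_mat S A \<longleftrightarrow> A \<in> carrier_mat (2*S) (2*S) \<and>
     transpose_mat A * A = 1\<^sub>m (2*S)"

definition SpO :: "nat \<Rightarrow> real mat set" where
  "SpO S = {A. orthogonal_real_mat S A \<and> symplectic_mat S A}"

definition hermitian_psd :: "nat \<Rightarrow> complex mat \<Rightarrow> bool" where
  "hermitian_psd n M \<longleftrightarrow> M \<in> carrier_mat n n \<and>
     (\<forall>i<n. \<forall>j<n. M $$ (i,j) = cnj (M $$ (j,i))) \<and>
     (\<forall>v \<in> carrier_vec n.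
        let q = (\<Sum>i<n. \<Sum>j<n. cnj (v $ i) * M $$ (i,j) * v $ j)
        in Im q = 0 \<and> Re q \<ge> 0)"

definition quantum_CM :: "nat \<Rightarrow> real mat \<Rightarrow> bool" where
  "quantum_CM S G \<longleftrightarrow> G \<in> carrier_mat (2*S) (2*S) \<and>
     transpose_mat G = G \<and>
     (\<forall>v \<in> carrier_vec (2*S). v \<noteq> 0\<^sub>v (2*S) \<longrightarrow> v \<bullet> (G *\<^sub>v v) > 0) \<and>
     hermitian_psd (2*S) (map_mat complex_of_real G + \<i> \<cdot>\<^sub>m map_mat complex_of_real (Omega S))"

definition eigenspectrum :: "nat \<Rightarrow> real mat \<Rightarrow> real list \<Rightarrow> bool" where
  "eigenspectrum S G Lam \<longleftrightarrow> G \<in> carrier_mat (2*S) (2*S) \<and> length Lam = 2*S \<and>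
     sorted_wrt (\<ge>) Lam \<and>
     char_poly G = prod_list (map (\<lambda>l. [:- l, 1:]) Lam)"

(* Graph G(Lambda) on vertices {0..<2S} (0-indexed version of {1..2S}). *)
definition lam_edge :: "real list \<Rightarrow> nat set \<Rightarrow> bool" where
  "lam_edge Lam e \<longleftrightarrow> (\<exists>i j. e = {i,j} \<and> i < j \<and> j < length Lam \<and> Lam ! i * Lam ! j \<ge> 1)"

definition pure_edge :: "real list \<Rightarrow> nat set \<Rightarrow> bool" where
  "pure_edge Lam e \<longleftrightarrow> (\<exists>i j. e = {i,j} \<and> i < j \<and> j < length Lam \<and> Lam ! i * Lam ! j = 1)"

definition perfect_matching :: "real list \<Rightarrow> nat set set \<Rightarrow> bool" where
  "perfect_matching Lam M \<longleftrightarrow> (\<forall>e\<in>M. lam_edge Lam e) \<and>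
     (\<forall>v < length Lam. \<exists>!e. e \<in> M \<and> v \<in> e)"

definition unique_pairing :: "real list \<Rightarrow> bool" where
  "unique_pairing Lam \<longleftrightarrow> (\<exists>M. perfect_matching Lam M) \<and>
     (\<forall>M M'. perfect_matching Lam M \<longrightarrow> perfect_matching Lam M' \<longrightarrow>
        (\<exists>\<pi>. \<pi> permutes {0..<length Lam} \<and> (\<forall>i < length Lam. Lam ! (\<pi> i) = Lam ! i) \<and>
             (\<lambda>e. \<pi> ` e) ` M = M'))"

definition t_pure_unique_pairing :: "nat \<Rightarrow> real list \<Rightarrow> bool" where
  "t_pure_unique_pairing t Lam \<longleftrightarrow> unique_pairing Lam \<and>
     (\<exists>M. perfect_matching Lam M \<and> card {e \<in> M. pure_edge Lam e} \<ge> t)"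

end

(*
  Both covariance matrices are reduced by the same induction on the number of modes.  A mode
  can be split off from \<Gamma> once some unit vector a satisfies \<Gamma> a = \<lambda>\<^sub>q a and
  \<Gamma> (\<Omega> a) = \<lambda>\<^sub>p (\<Omega> a): the group SpO acts transitively on unit vectors (a rotation inside
  one mode followed by the commuting Householder reflections of v and \<Omega> v), and an element
  of SpO sending the second basis vector to a conjugates \<Gamma> into diag(\<lambda>\<^sub>p, \<lambda>\<^sub>q) \<oplus> \<Gamma>\<^sub>1,
  where \<Gamma>\<^sub>1 again obeys the uncertainty relation and has the remaining spectrum.

  Such an a exists for a pure pair \<lambda>\<^sub>p \<lambda>\<^sub>q = 1: for a orthogonal to the eigenvectors of the
  larger eigenvalues, the Rayleigh bounds a\<^sup>T\<Gamma>a \<le> \<lambda>\<^sub>q and (\<Omega>a)\<^sup>T\<Gamma>(\<Omega>a) \<le> \<lambda>\<^sub>p meet the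
  uncertainty relation (a\<^sup>T\<Gamma>a)((\<Omega>a)\<^sup>T\<Gamma>(\<Omega>a)) \<ge> 1, forcing equality.  Since the sorted
  positive spectrum has a perfect matching, the antipodal pairing \<lambda>\<^sub>k \<leftrightarrow> \<lambda>\<^sub>2\<^sub>S\<^sub>-\<^sub>1\<^sub>-\<^sub>k is one,
  so by uniqueness (S-1)-purity leaves at most one impure antipodal pair.  Splitting off the
  outermost pair, or the next one when the outermost is impure, preserves this, and a single
  mode needs no purity at all.
*)

theory Submission
  imports Defs
begin

section \<open>Orthogonal matrices and congruence\<close>

lemma sum_delta_mult:
  fixes f :: "nat \<Rightarrow> real"
  assumes "i < n"
  shows "(\<Sum>k = 0..<n. (if i = k then 1 else 0) * f k) = f i"
    and "(\<Sum>k = 0..<n. (if k = i then 1 else 0) * f k) = f i"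
  using assms by (simp_all add: if_distrib[of "\<lambda>c. c * _"] cong: if_cong)

lemma real_sprod_self_eq_0_iff:
  fixes v :: "real vec"
  assumes "v \<in> carrier_vec n"
  shows "v \<bullet> v = 0 \<longleftrightarrow> v = 0\<^sub>v n"
  using conjugate_square_eq_0_vec[OF assms] by simp

lemma real_sprod_self_pos:
  fixes v :: "real vec"
  assumes "v \<in> carrier_vec n" and "v \<noteq> 0\<^sub>v n"
  shows "v \<bullet> v > 0"
  using conjugate_square_greater_0_vec[OF assms(1)] assms(2) by simp

lemma sprod_transpose_mult_vec:
  fixes W :: "'a :: comm_ring mat"
  assumes W: "W \<in> carrier_mat n n" and x: "x \<in> carrier_vec n" and z: "z \<in> carrier_vec n"
  shows "x \<bullet> (transpose_mat W *\<^sub>v z) = (W *\<^sub>v x) \<bullet> z"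
proof -
  have "(transpose_mat W *\<^sub>v z) \<bullet> x = z \<bullet> (W *\<^sub>v x)" by (rule transpose_vec_mult_scalar[OF W x z])
  then show ?thesis
    using W x z by (simp add: comm_scalar_prod[of _ n])
qed

lemma mult_unit_vec_index:
  fixes A :: "'a :: comm_ring_1 mat"
  assumes A: "A \<in> carrier_mat m n" and i: "i < m" and j: "j < n"
  shows "(A *\<^sub>v unit_vec n j) $ i = A $$ (i,j)"
  using A i j by (simp add: scalar_prod_right_unit)

lemma eq_matI_mult_vec:
  fixes A B :: "'a :: comm_ring_1 mat"
  assumes A: "A \<in> carrier_mat m n" and B: "B \<in> carrier_mat m n"
    and eq: "\<And>x. x \<in> carrier_vec n \<Longrightarrow> A *\<^sub>v x = B *\<^sub>v x"
  shows "A = B"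
proof (rule eq_matI)
  fix i j assume "i < dim_row B" "j < dim_col B"
  then have i: "i < m" and j: "j < n" using B by auto
  show "A $$ (i, j) = B $$ (i, j)"
    using mult_unit_vec_index[OF A i j] mult_unit_vec_index[OF B i j] eq[of "unit_vec n j"] by simp
qed (use A B in auto)

lemma square_mult_carrier_mat[simp]:
  "A \<in> carrier_mat n n \<Longrightarrow> B \<in> carrier_mat n n \<Longrightarrow> A * B \<in> carrier_mat n n"
  by (rule mult_carrier_mat)

lemma mat_diag_dims[simp]: "dim_row (mat_diag n f) = n" "dim_col (mat_diag n f) = n"
  by (simp_all add: mat_diag_def)

lemma orthogonal_mat_sprod:
  fixes U :: "'a :: comm_ring_1 mat"
  assumes U: "U \<in> carrier_mat n n" and Uo: "transpose_mat U * U = 1\<^sub>m n"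
    and x: "x \<in> carrier_vec n" and y: "y \<in> carrier_vec n"
  shows "(U *\<^sub>v x) \<bullet> (U *\<^sub>v y) = x \<bullet> y"
proof -
  have "(U *\<^sub>v x) \<bullet> (U *\<^sub>v y) = x \<bullet> (transpose_mat U *\<^sub>v (U *\<^sub>v y))"
    using sprod_transpose_mult_vec[OF U x, of "U *\<^sub>v y"] U y by simp
  also have "transpose_mat U *\<^sub>v (U *\<^sub>v y) = y"
    using U y Uo by (simp add: assoc_mult_mat_vec[of _ n n _ n, symmetric])
  finally show ?thesis .
qed

lemma orthogonal_mat_right_inverse:
  fixes U :: "'a :: field mat"
  assumes U: "U \<in> carrier_mat n n" and Uo: "transpose_mat U * U = 1\<^sub>m n"
  shows "U * transpose_mat U = 1\<^sub>m n"
  by (rule mat_mult_left_right_inverse[of "transpose_mat U" n U]) (use U Uo in auto)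

lemma orthogonal_congruence_inverse:
  fixes U G :: "'a :: field mat"
  assumes U: "U \<in> carrier_mat n n" and Uo: "transpose_mat U * U = 1\<^sub>m n" and G: "G \<in> carrier_mat n n"
  shows "U * (transpose_mat U * G * U) * transpose_mat U = G"
proof -
  have "U * (transpose_mat U * G * U) * transpose_mat U
      = (U * transpose_mat U) * G * (U * transpose_mat U)"
    using U G by (simp add: assoc_mult_mat[of _ n n _ n _ n])
  then show ?thesis using orthogonal_mat_right_inverse[OF U Uo] G by simp
qed

lemma congruence_mult:
  fixes U V G :: "'a :: comm_ring_1 mat"
  assumes U: "U \<in> carrier_mat n n" and V: "V \<in> carrier_mat n n" and G: "G \<in> carrier_mat n n"
  shows "transpose_mat (U * V) * G * (U * V) = transpose_mat V * (transpose_mat U * G * U) * V"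
  using U V G by (simp add: transpose_mult[of _ n n] assoc_mult_mat[of _ n n _ n _ n])

lemma orthogonal_mult:
  fixes U V :: "'a :: comm_ring_1 mat"
  assumes U: "U \<in> carrier_mat n n" and V: "V \<in> carrier_mat n n"
    and Uo: "transpose_mat U * U = 1\<^sub>m n" and Vo: "transpose_mat V * V = 1\<^sub>m n"
  shows "transpose_mat (U * V) * (U * V) = 1\<^sub>m n"
  using congruence_mult[OF U V one_carrier_mat] U V Uo Vo by simp

lemma char_poly_orthogonal_congruence:
  fixes U G :: "'a :: field mat"
  assumes U: "U \<in> carrier_mat n n" and Uo: "transpose_mat U * U = 1\<^sub>m n" and G: "G \<in> carrier_mat n n"
  shows "char_poly (transpose_mat U * G * U) = char_poly G"
  by (rule char_poly_similar, rule similar_matI[of _ _ "transpose_mat U" U n])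
    (use U G Uo orthogonal_mat_right_inverse[OF U Uo] orthogonal_congruence_inverse[OF U Uo G] in auto)

lemma symmetric_congruence:
  fixes U G :: "'a :: comm_ring_1 mat"
  assumes U: "U \<in> carrier_mat n m" and G: "G \<in> carrier_mat n n" and sym: "transpose_mat G = G"
  shows "transpose_mat (transpose_mat U * G * U) = transpose_mat U * G * U"
proof -
  have "transpose_mat (transpose_mat U * G * U) = transpose_mat U * transpose_mat (transpose_mat U * G)"
    using U G by (intro transpose_mult[of _ m n]) auto
  also have "transpose_mat (transpose_mat U * G) = G * U"
    using U G sym by (simp add: transpose_mult[of _ m n])
  finally show ?thesis using U G by (simp add: assoc_mult_mat[of _ m n _ n _ m])
qed

section \<open>Householder reflections\<close>

text \<open>For \<open>v = 0\<close> this is the identity matrix, as division by zero yields \<open>0\<close>.\<close>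
definition householder :: "nat \<Rightarrow> real vec \<Rightarrow> real mat" where
  "householder n v = mat n n (\<lambda>(i,j). (if i = j then 1 else 0) - 2 * v$i * v$j / (v \<bullet> v))"

lemma householder_carrier[simp]: "householder n v \<in> carrier_mat n n"
  by (simp add: householder_def)

lemma householder_dim[simp]: "dim_row (householder n v) = n" "dim_col (householder n v) = n"
  by (auto simp: householder_def)

lemma householder_transpose[simp]: "transpose_mat (householder n v) = householder n v"
  by (rule eq_matI) (auto simp: householder_def)

lemma householder_uminus:
  assumes "v \<in> carrier_vec n"
  shows "householder n (- v) = householder n v"
proof -
  have "(- v) \<bullet> (- v) = v \<bullet> v" unfolding scalar_prod_def by simp
  then show ?thesis unfolding householder_def using assms by (intro eq_matI) auto
qed

lemma householder_mult_index:
  assumes v: "v \<in> carrier_vec n" and w: "w \<in> carrier_vec n" and i: "i < n" and j: "j < n"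
  shows "(householder n v * householder n w) $$ (i,j) =
    (if i = j then 1 else 0) - 2 * v$i * v$j / (v \<bullet> v) - 2 * w$i * w$j / (w \<bullet> w)
    + (4 * v$i * w$j / ((v \<bullet> v) * (w \<bullet> w))) * (v \<bullet> w)"
proof -
  define a where "a = v \<bullet> v"
  define b where "b = w \<bullet> w"
  have vw: "v \<bullet> w = (\<Sum>k = 0..<n. v$k * w$k)" using w by (simp add: scalar_prod_def)
  have "(householder n v * householder n w) $$ (i,j) =
     (\<Sum>k = 0..<n. ((if i = k then 1 else 0) - 2 * v$i * v$k / a) * ((if k = j then 1 else 0) - 2 * w$k * w$j / b))"
    using i j by (simp add: householder_def scalar_prod_def a_def b_def row_def col_def)
  also have "\<dots> = (\<Sum>k = 0..<n. (if i = k then 1 else 0) * (if k = j then 1 else 0))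
     - (\<Sum>k = 0..<n. (if i = k then 1 else 0) * (2 * w$k * w$j / b))
     - (\<Sum>k = 0..<n. (if k = j then 1 else 0) * (2 * v$i * v$k / a))
     + (4 * v$i * w$j / (a*b)) * (\<Sum>k = 0..<n. v$k * w$k)"
    by (simp add: sum_subtractf sum.distrib sum_distrib_left sum_divide_distrib algebra_simps)
  also have "\<dots> = (if i = j then 1 else 0) - 2 * w$i * w$j / b - 2 * v$i * v$j / a + (4 * v$i * w$j / (a*b)) * (v \<bullet> w)"
    unfolding sum_delta_mult[OF i] sum_delta_mult[OF j] vw by simp
  finally show ?thesis unfolding a_def b_def by simp
qed

lemma householder_involution:
  assumes v: "v \<in> carrier_vec n"
  shows "householder n v * householder n v = 1\<^sub>m n"
proof (rule eq_matI)
  fix i j assume "i < dim_row (1\<^sub>m n)" and "j < dim_col (1\<^sub>m n)"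
  then have i: "i < n" and j: "j < n" by auto
  show "(householder n v * householder n v) $$ (i,j) = 1\<^sub>m n $$ (i,j)"
    unfolding householder_mult_index[OF v v i j] using i j
    by (cases "v \<bullet> v = 0") (auto simp: field_simps)
qed (use v in auto)

lemma householder_commute:
  assumes v: "v \<in> carrier_vec n" and w: "w \<in> carrier_vec n" and vw: "v \<bullet> w = 0"
  shows "householder n v * householder n w = householder n w * householder n v"
proof (rule eq_matI)
  fix i j assume "i < dim_row (householder n w * householder n v)" "j < dim_col (householder n w * householder n v)"
  then have i: "i < n" and j: "j < n" by auto
  have wv: "w \<bullet> v = 0" using vw comm_scalar_prod[OF v w] by simp
  show "(householder n v * householder n w) $$ (i, j) = (householder n w * householder n v) $$ (i, j)"
    unfolding householder_mult_index[OF v w i j] householder_mult_index[OF w v i j] vw wv by simp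
qed auto

lemma householder_mult_vec:
  assumes v: "v \<in> carrier_vec n" and x: "x \<in> carrier_vec n"
  shows "householder n v *\<^sub>v x = x - (2 * (v \<bullet> x) / (v \<bullet> v)) \<cdot>\<^sub>v v"
proof (rule eq_vecI)
  fix i assume "i < dim_vec (x - (2 * (v \<bullet> x) / (v \<bullet> v)) \<cdot>\<^sub>v v)"
  then have i: "i < n" using x v by auto
  have "(householder n v *\<^sub>v x) $ i = (\<Sum>k = 0..<n. ((if i = k then 1 else 0) - 2 * v$i * v$k / (v\<bullet>v)) * x$k)"
    using i x by (simp add: householder_def scalar_prod_def row_def)
  also have "\<dots> = (\<Sum>k = 0..<n. (if i = k then 1 else 0) * x$k) - (2 * v$i / (v\<bullet>v)) * (\<Sum>k = 0..<n. v$k * x$k)"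
    by (simp add: sum_subtractf sum_distrib_left algebra_simps)
  also have "\<dots> = x$i - (2 * v$i / (v\<bullet>v)) * (v \<bullet> x)"
    using x by (simp add: sum_delta_mult[OF i] scalar_prod_def)
  finally show "(householder n v *\<^sub>v x) $ i = (x - (2 * (v \<bullet> x) / (v \<bullet> v)) \<cdot>\<^sub>v v) $ i"
    using i x v by simp
qed (use v x in auto)

lemma householder_orthogonal_vec:
  assumes v: "v \<in> carrier_vec n" and x: "x \<in> carrier_vec n" and vx: "v \<bullet> x = 0"
  shows "householder n v *\<^sub>v x = x"
  unfolding householder_mult_vec[OF v x] vx using x v by (intro eq_vecI) auto

lemma householder_maps_unit:
  fixes x y :: "real vec"
  assumes x: "x \<in> carrier_vec n" and y: "y \<in> carrier_vec n" and xx: "x \<bullet> x = 1" and yy: "y \<bullet> y = 1"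
  shows "householder n (x - y) *\<^sub>v x = y"
proof (cases "x = y")
  case True
  then have "householder n (x - y) = 1\<^sub>m n" using y by (intro eq_matI) (auto simp: householder_def)
  then show ?thesis using True y by simp
next
  case False
  define v where "v = x - y"
  have v: "v \<in> carrier_vec n" using x y by (simp add: v_def)
  have yx: "y \<bullet> x = x \<bullet> y" using x y by (simp add: comm_scalar_prod[of _ n])
  have vv: "v \<bullet> v = 2 - 2 * (x \<bullet> y)" and vx: "v \<bullet> x = 1 - x \<bullet> y"
    unfolding v_def using x y xx yy yx
    by (simp_all add: minus_scalar_prod_distrib[of _ n] scalar_prod_minus_distrib[of _ n])
  have "v \<noteq> 0\<^sub>v n"
  proof
    assume "v = 0\<^sub>v n"
    then have "\<And>i. i < n \<Longrightarrow> x $ i - y $ i = 0"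
      using x y unfolding v_def by (metis carrier_vecD index_minus_vec(1) index_zero_vec(1))
    then have "x = y" using x y by (intro eq_vecI) auto
    with False show False ..
  qed
  then have "v \<bullet> v \<noteq> 0" using real_sprod_self_eq_0_iff[OF v] by simp
  then have "2 * (v \<bullet> x) / (v \<bullet> v) = 1" unfolding vx vv by (simp add: field_simps)
  then show ?thesis
    unfolding householder_mult_vec[OF v x] v_def[symmetric] using x y v by (intro eq_vecI) (auto simp: v_def)
qed

section \<open>Block-diagonal matrices and the spectral theorem\<close>

definition block_diag :: "'a::zero mat \<Rightarrow> 'a mat \<Rightarrow> 'a mat" where
  "block_diag A B = four_block_mat A (0\<^sub>m (dim_row A) (dim_col B)) (0\<^sub>m (dim_row B) (dim_col A)) B"

lemma block_diag_carrier[simp]: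
  "A \<in> carrier_mat k k \<Longrightarrow> B \<in> carrier_mat m m \<Longrightarrow> block_diag A B \<in> carrier_mat (k+m) (k+m)"
  unfolding block_diag_def by auto

lemma block_diag_dim[simp]:
  "dim_row (block_diag A B) = dim_row A + dim_row B" "dim_col (block_diag A B) = dim_col A + dim_col B"
  unfolding block_diag_def by auto

lemma block_diag_mult:
  fixes A :: "'a :: semiring_1 mat"
  assumes A: "A \<in> carrier_mat k k" and B: "B \<in> carrier_mat m m"
    and C: "C \<in> carrier_mat k k" and D: "D \<in> carrier_mat m m"
  shows "block_diag A B * block_diag C D = block_diag (A * C) (B * D)"
proof -
  have "block_diag A B * block_diag C D = four_block_mat (A * C + 0\<^sub>m k m * 0\<^sub>m m k) (A * 0\<^sub>m k m + 0\<^sub>m k m * D)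
    (0\<^sub>m m k * C + B * 0\<^sub>m m k) (0\<^sub>m m k * 0\<^sub>m k m + B * D)"
    unfolding block_diag_def using A B C D by (subst mult_four_block_mat[of _ k k _ m _ m _ _ k _ m]) auto
  also have "\<dots> = block_diag (A * C) (B * D)"
    unfolding block_diag_def using A B C D by (intro cong_four_block_mat) auto
  finally show ?thesis .
qed

lemma block_diag_transpose:
  assumes "A \<in> carrier_mat k k" and "B \<in> carrier_mat m m"
  shows "transpose_mat (block_diag A B) = block_diag (transpose_mat A) (transpose_mat B)"
  unfolding block_diag_def using assms by (subst transpose_four_block_mat[of _ k k _ m _ m]) auto

lemma block_diag_congruence:
  fixes A :: "'a :: comm_ring_1 mat"
  assumes A: "A \<in> carrier_mat k k" and B: "B \<in> carrier_mat m m"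
    and C: "C \<in> carrier_mat k k" and D: "D \<in> carrier_mat m m"
  shows "transpose_mat (block_diag A B) * block_diag C D * block_diag A B =
    block_diag (transpose_mat A * C * A) (transpose_mat B * D * B)"
  using A B C D by (simp add: block_diag_transpose block_diag_mult[of _ k _ m])

lemma block_diag_one[simp]: "block_diag (1\<^sub>m k) (1\<^sub>m m) = 1\<^sub>m (k+m)"
  unfolding block_diag_def by simp

lemma block_diag_mat_diag:
  "block_diag (mat_diag k f) (mat_diag m g) = mat_diag (k+m) (\<lambda>i. if i < k then f i else g (i - k))"
  by (rule eq_matI) (auto simp: block_diag_def mat_diag_def)

lemma block_diag_mult_append_vec:
  fixes A :: "'a :: comm_ring_1 mat"
  assumes A: "A \<in> carrier_mat k k" and B: "B \<in> carrier_mat m m"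
    and x: "x \<in> carrier_vec k" and y: "y \<in> carrier_vec m"
  shows "block_diag A B *\<^sub>v (x @\<^sub>v y) = (A *\<^sub>v x) @\<^sub>v (B *\<^sub>v y)"
  unfolding block_diag_def using mult_mat_vec_split[OF A B x y] A B by simp

lemma symmetric_block_diag_lower:
  assumes A: "A \<in> carrier_mat k k" and B: "B \<in> carrier_mat m m"
    and sym: "transpose_mat (block_diag A B) = block_diag A B"
  shows "transpose_mat B = B"
proof (rule eq_matI)
  fix i j assume "i < dim_row B" "j < dim_col B"
  then have i: "i < m" and j: "j < m" using B by auto
  have "transpose_mat (block_diag A B) $$ (i+k, j+k) = block_diag A B $$ (i+k, j+k)" using sym by simp
  then show "transpose_mat B $$ (i, j) = B $$ (i, j)" using i j A B by (simp add: block_diag_def)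
qed (use B in auto)

lemma char_poly_block_diag:
  fixes A :: "'a :: idom mat"
  assumes A: "A \<in> carrier_mat k k" and B: "B \<in> carrier_mat m m"
  shows "char_poly (block_diag A B) = char_poly A * char_poly B"
proof -
  let ?cm = "\<lambda> A. [:0, 1:] \<cdot>\<^sub>m 1\<^sub>m (dim_row A) + map_mat (\<lambda>a. [:- a:]) A"
  have "char_poly (block_diag A B) = det (?cm (block_diag A B))"
    unfolding char_poly_defs by simp
  also have "?cm (block_diag A B) = four_block_mat (?cm A) (0\<^sub>m k m) (0\<^sub>m m k) (?cm B)"
    by (rule eq_matI) (use A B in \<open>auto simp: block_diag_def one_poly_def\<close>)
  also have "det \<dots> = det (?cm A) * det (?cm B)"
    by (rule det_four_block_mat_lower_left_zero) (use A B in auto)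
  also have "\<dots> = char_poly A * char_poly B" unfolding char_poly_defs ..
  finally show ?thesis .
qed

lemma char_poly_mat_diag:
  fixes f :: "nat \<Rightarrow> 'a :: comm_ring_1"
  shows "char_poly (mat_diag n f) = (\<Prod>i \<leftarrow> [0..<n]. [:- f i, 1:])"
proof -
  have "char_poly (mat_diag n f) = (\<Prod>a \<leftarrow> diag_mat (mat_diag n f). [:- a, 1:])"
    by (rule char_poly_upper_triangular[of _ n]) (auto simp: mat_diag_def upper_triangular_def)
  also have "diag_mat (mat_diag n f) = map f [0..<n]"
    by (rule nth_equalityI) (auto simp: diag_mat_def mat_diag_def)
  finally show ?thesis by (simp only: map_map comp_def)
qed

lemma length_char_poly_roots:
  fixes Lam :: "'a :: idom list"
  assumes G: "G \<in> carrier_mat n n" and cp: "char_poly G = (\<Prod>l \<leftarrow> Lam. [:- l, 1:])"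
  shows "length Lam = n"
proof -
  have "degree (char_poly G) = n" using degree_monic_char_poly[OF G] by auto
  moreover have "degree (\<Prod>l \<leftarrow> Lam. [:- l, 1:]) = length Lam"
    using degree_linear_factors[of uminus Lam] by simp
  ultimately show ?thesis using cp by simp
qed

lemma orthogonal_deflation:
  fixes G W :: "'a :: field mat"
  assumes G: "G \<in> carrier_mat (k+m) (k+m)" and sym: "transpose_mat G = G"
    and W: "W \<in> carrier_mat (k+m) (k+m)" and Wo: "transpose_mat W * W = 1\<^sub>m (k+m)"
    and eig: "\<And>i. i < k \<Longrightarrow> G *\<^sub>v (W *\<^sub>v unit_vec (k+m) i) = d i \<cdot>\<^sub>v (W *\<^sub>v unit_vec (k+m) i)"
  shows "transpose_mat W * G * W =
    block_diag (mat_diag k d) (mat m m (\<lambda>(i,j). (transpose_mat W * G * W) $$ (i+k, j+k)))"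
proof -
  let ?n = "k+m"
  define Gt where "Gt = transpose_mat W * G * W"
  have Gt: "Gt \<in> carrier_mat ?n ?n" using W G by (simp add: Gt_def)
  have Gt_sym: "Gt $$ (i,j) = Gt $$ (j,i)" if "i < ?n" "j < ?n" for i j
    using arg_cong[OF symmetric_congruence[OF W G sym], of "\<lambda>X. X $$ (j,i)"] that W G
    by (simp add: Gt_def)
  have col: "Gt $$ (j,i) = (if j = i then d i else 0)" if i: "i < k" and j: "j < ?n" for i j
  proof -
    let ?e = "unit_vec ?n i"
    have "Gt *\<^sub>v ?e = transpose_mat W *\<^sub>v (G *\<^sub>v (W *\<^sub>v ?e))"
      using W G by (simp add: Gt_def assoc_mult_mat_vec[of _ ?n ?n _ ?n])
    also have "\<dots> = d i \<cdot>\<^sub>v ((transpose_mat W * W) *\<^sub>v ?e)"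
      using W i by (simp add: eig mult_mat_vec[of _ ?n ?n] assoc_mult_mat_vec[of _ ?n ?n _ ?n])
    finally have "Gt *\<^sub>v ?e = d i \<cdot>\<^sub>v ?e" using Wo by simp
    then show ?thesis using mult_unit_vec_index[OF Gt j, of i] i j by auto
  qed
  have "Gt = block_diag (mat_diag k d) (mat m m (\<lambda>(i,j). Gt $$ (i+k, j+k)))"
  proof (rule eq_matI)
    fix i j assume "i < dim_row (block_diag (mat_diag k d) (mat m m (\<lambda>(i,j). Gt $$ (i+k, j+k))))"
      and "j < dim_col (block_diag (mat_diag k d) (mat m m (\<lambda>(i,j). Gt $$ (i+k, j+k))))"
    then have i: "i < ?n" and j: "j < ?n" by auto
    show "Gt $$ (i,j) = block_diag (mat_diag k d) (mat m m (\<lambda>(i,j). Gt $$ (i+k, j+k))) $$ (i,j)"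
      using i j col[of j i] col[of i j] Gt_sym[OF i j] by (auto simp: block_diag_def mat_diag_def)
  qed (use Gt in auto)
  then show ?thesis unfolding Gt_def .
qed

lemma exists_unit_eigenvector:
  fixes G :: "real mat"
  assumes G: "G \<in> carrier_mat n n" and root: "poly (char_poly G) e = 0"
  shows "\<exists>u \<in> carrier_vec n. u \<bullet> u = 1 \<and> G *\<^sub>v u = e \<cdot>\<^sub>v u"
proof -
  obtain v where "eigenvector G v e"
    using eigenvalue_root_char_poly[OF G] root unfolding eigenvalue_def by blast
  then have v: "v \<in> carrier_vec n" and vnz: "v \<noteq> 0\<^sub>v n" and Gv: "G *\<^sub>v v = e \<cdot>\<^sub>v v"
    using G unfolding eigenvector_def by auto
  define u where "u = (1 / sqrt (v \<bullet> v)) \<cdot>\<^sub>v v"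
  have vv: "v \<bullet> v > 0" by (rule real_sprod_self_pos[OF v vnz])
  have "u \<in> carrier_vec n" using v by (simp add: u_def)
  moreover have "u \<bullet> u = 1" using v vv unfolding u_def by (simp add: field_simps)
  moreover have "G *\<^sub>v u = e \<cdot>\<^sub>v u" unfolding u_def using G v Gv
    by (simp add: mult_mat_vec smult_smult_assoc mult.commute)
  ultimately show ?thesis by blast
qed

lemma householder_deflation:
  fixes G :: "real mat"
  assumes G: "G \<in> carrier_mat (1+m) (1+m)" and sym: "transpose_mat G = G"
    and u: "u \<in> carrier_vec (1+m)" and uu: "u \<bullet> u = 1" and Gu: "G *\<^sub>v u = e \<cdot>\<^sub>v u"
  shows "\<exists>H G1. H \<in> carrier_mat (1+m) (1+m) \<and> transpose_mat H * H = 1\<^sub>m (1+m) \<and>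
    G1 \<in> carrier_mat m m \<and> transpose_mat G1 = G1 \<and>
    transpose_mat H * G * H = block_diag (mat_diag 1 (\<lambda>_. e)) G1"
proof -
  let ?n = "1+m"
  define H where "H = householder ?n (unit_vec ?n 0 - u)"
  have H: "H \<in> carrier_mat ?n ?n" by (simp add: H_def)
  have Ho: "transpose_mat H * H = 1\<^sub>m ?n"
    unfolding H_def using u by (simp add: householder_involution)
  have "H *\<^sub>v unit_vec ?n 0 = u"
    unfolding H_def by (rule householder_maps_unit[OF _ u _ uu]) auto
  then have HGH: "transpose_mat H * G * H = block_diag (mat_diag 1 (\<lambda>_. e))
      (mat m m (\<lambda>(i,j). (transpose_mat H * G * H) $$ (i+1, j+1)))"
    using orthogonal_deflation[OF G sym H Ho, of "\<lambda>_. e"] Gu by auto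
  moreover have "transpose_mat (mat m m (\<lambda>(i,j). (transpose_mat H * G * H) $$ (i+1, j+1))) =
      mat m m (\<lambda>(i,j). (transpose_mat H * G * H) $$ (i+1, j+1))"
    using symmetric_block_diag_lower[OF mat_diag_dim _, of _ m] symmetric_congruence[OF H G sym] HGH
    by (metis mat_carrier)
  ultimately show ?thesis using H Ho by (intro exI conjI) auto
qed

theorem spectral_theorem_real_symmetric:
  fixes G :: "real mat"
  assumes "G \<in> carrier_mat n n" and "transpose_mat G = G"
    and "char_poly G = (\<Prod>l \<leftarrow> Lam. [:- l, 1:])"
  shows "\<exists>U \<in> carrier_mat n n. transpose_mat U * U = 1\<^sub>m n \<and> transpose_mat U * G * U = mat_diag n ((!) Lam)"
  using assms
proof (induct Lam arbitrary: n G)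
  case Nil
  then have "n = 0" using length_char_poly_roots[of G n "[] :: real list"] by simp
  then show ?case using Nil by (intro bexI[of _ "1\<^sub>m 0"]) (auto intro!: eq_matI)
next
  case (Cons e es n G)
  note G = Cons(2) and sym = Cons(3) and cp = Cons(4)
  define m where "m = length es"
  have n: "n = 1 + m" using length_char_poly_roots[OF G cp] m_def by simp
  obtain u where "u \<in> carrier_vec n" "u \<bullet> u = 1" "G *\<^sub>v u = e \<cdot>\<^sub>v u"
    using exists_unit_eigenvector[OF G] cp by auto
  then obtain H G1 where H: "H \<in> carrier_mat n n" and Ho: "transpose_mat H * H = 1\<^sub>m n"
    and G1: "G1 \<in> carrier_mat m m" and sym1: "transpose_mat G1 = G1"
    and HGH: "transpose_mat H * G * H = block_diag (mat_diag 1 (\<lambda>_. e)) G1"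
    using householder_deflation[of G m, folded n] G sym by blast
  have "[:- e, 1:] * char_poly G1 = char_poly G"
    using char_poly_orthogonal_congruence[OF H Ho G] char_poly_block_diag[OF mat_diag_dim G1]
    by (simp add: HGH char_poly_mat_diag)
  then have "char_poly G1 = (\<Prod>l \<leftarrow> es. [:- l, 1:])"
    using cp mult_left_cancel[of "[:- e, 1:]"] by (simp del: mult_pCons_left)
  then obtain U1 where U1: "U1 \<in> carrier_mat m m" and U1o: "transpose_mat U1 * U1 = 1\<^sub>m m"
    and U1d: "transpose_mat U1 * G1 * U1 = mat_diag m ((!) es)"
    using Cons(1)[OF G1 sym1] by blast
  define B where "B = block_diag (1\<^sub>m 1) U1"
  have B: "B \<in> carrier_mat n n" using block_diag_carrier[of "1\<^sub>m 1" 1 U1 m] U1 n by (simp add: B_def)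
  have Bo: "transpose_mat B * B = 1\<^sub>m n"
    using block_diag_congruence[of "1\<^sub>m 1" 1 U1 m "1\<^sub>m 1" "1\<^sub>m m"] U1 U1o n by (simp add: B_def)
  have diag: "(\<lambda>i. if i < 1 then e else es ! (i - 1)) = (!) (e # es)"
    by (rule ext) (simp add: nth_Cons')
  have "transpose_mat (H * B) * G * (H * B) = transpose_mat B * block_diag (mat_diag 1 (\<lambda>_. e)) G1 * B"
    using congruence_mult[OF H B G] HGH by simp
  also have "\<dots> = block_diag (mat_diag 1 (\<lambda>_. e)) (mat_diag m ((!) es))"
    using block_diag_congruence[of "1\<^sub>m 1" 1 U1 m "mat_diag 1 (\<lambda>_. e)" G1] U1 G1
    by (simp add: B_def U1d)
  also have "\<dots> = mat_diag n ((!) (e # es))"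
    unfolding block_diag_mat_diag n diag ..
  finally have "transpose_mat (H * B) * G * (H * B) = mat_diag n ((!) (e # es))" .
  moreover have "H * B \<in> carrier_mat n n" using H B by simp
  ultimately show ?case using orthogonal_mult[OF H B Ho Bo] by blast
qed

section \<open>The symplectic form and the group SpO\<close>

lemma Omega_carrier[simp]: "Omega S \<in> carrier_mat (2*S) (2*S)"
  by (simp add: Omega_def)

lemma Omega_dim[simp]: "dim_row (Omega S) = 2*S" "dim_col (Omega S) = 2*S"
  by (auto simp: Omega_def)

lemma Omega_index:
  "i < 2*S \<Longrightarrow> j < 2*S \<Longrightarrow> Omega S $$ (i,j) =
    (if even i \<and> j = i + 1 then 1 else if odd i \<and> i = j + 1 then -1 else 0)"
  by (simp add: Omega_def)

lemma Omega_transpose: "transpose_mat (Omega S) = - Omega S"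
  by (rule eq_matI) (auto simp: Omega_index)

lemma Omega_Suc: "Omega (Suc S) = block_diag (Omega 1) (Omega S)"
proof (rule eq_matI)
  fix i j assume "i < dim_row (block_diag (Omega 1) (Omega S))" "j < dim_col (block_diag (Omega 1) (Omega S))"
  then have i: "i < 2 + 2*S" and j: "j < 2 + 2*S" by simp_all
  have "2 \<le> i \<Longrightarrow> even (i - 2) = even i" "2 \<le> j \<Longrightarrow> even (j - 2) = even j"
    "i < 2 \<Longrightarrow> even i \<longleftrightarrow> i = 0" "j < 2 \<Longrightarrow> even j \<longleftrightarrow> j = 0" by presburger+
  then show "Omega (Suc S) $$ (i, j) = block_diag (Omega 1) (Omega S) $$ (i, j)"
    using i j by (cases "i < 2"; cases "j < 2") (auto simp: block_diag_def Omega_index)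
qed simp_all

abbreviation Om :: "nat \<Rightarrow> real vec \<Rightarrow> real vec" where "Om S x \<equiv> Omega S *\<^sub>v x"

lemma Om_carrier[simp]: "Om S x \<in> carrier_vec (2*S)"
  by (intro carrier_vecI) simp

lemma Om_index:
  assumes x: "x \<in> carrier_vec (2*S)" and i: "i < 2*S"
  shows "Om S x $ i = (if even i then x $ (i+1) else - x $ (i-1))"
proof -
  have "Om S x $ i = (\<Sum>k = 0..<2*S. Omega S $$ (i,k) * x $ k)"
    using x i by (simp add: scalar_prod_def row_def)
  also have "\<dots> = (if even i then x $ (i+1) else - x $ (i-1))"
  proof (cases "even i")
    case True
    then have i1: "i + 1 < 2*S" using i by presburger
    have "(\<Sum>k = 0..<2*S. Omega S $$ (i,k) * x $ k) = (\<Sum>k = 0..<2*S. (if k = i+1 then 1 else 0) * x $ k)"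
      by (rule sum.cong) (auto simp: Omega_index i True)
    then show ?thesis using True sum_delta_mult(2)[OF i1] by simp
  next
    case False
    have i1: "i - 1 < 2*S" using i by simp
    have "(\<Sum>k = 0..<2*S. Omega S $$ (i,k) * x $ k) = (\<Sum>k = 0..<2*S. (if k = i-1 then 1 else 0) * (- x $ k))"
      by (rule sum.cong) (use False i in \<open>auto simp: Omega_index\<close>)
    then show ?thesis using False sum_delta_mult(2)[OF i1, of "\<lambda>k. - x $ k"] by simp
  qed
  finally show ?thesis .
qed

lemma Om_Om:
  assumes x: "x \<in> carrier_vec (2*S)"
  shows "Om S (Om S x) = - x"
proof (rule eq_vecI)
  fix i assume "i < dim_vec (- x)"
  then have i: "i < 2*S" using x by simp
  show "Om S (Om S x) $ i = (- x) $ i"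
  proof (cases "even i")
    case True
    then have "i + 1 < 2*S" "odd (i + 1)" using i by presburger+
    then show ?thesis using True i x Om_index[OF Om_carrier i, of x] Om_index[OF x, of "i+1"] by simp
  next
    case False
    then have "i - 1 < 2*S" "even (i - 1)" "i - 1 + 1 = i" using i by presburger+
    then show ?thesis using False i x Om_index[OF Om_carrier i, of x] Om_index[OF x, of "i-1"] by simp
  qed
qed (use x in simp)

lemma Omega_square: "Omega S * Omega S = - 1\<^sub>m (2*S)"
  by (rule eq_matI_mult_vec[of _ "2*S" "2*S"])
    (auto simp: Om_Om assoc_mult_mat_vec[of _ "2*S" "2*S" _ "2*S"])

lemma Omega_orthogonal: "transpose_mat (Omega S) * Omega S = 1\<^sub>m (2*S)"
  unfolding Omega_transpose using Omega_square[of S] by simp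

lemma Om_sprod:
  assumes x: "x \<in> carrier_vec (2*S)" and y: "y \<in> carrier_vec (2*S)"
  shows "Om S x \<bullet> Om S y = x \<bullet> y"
  by (rule orthogonal_mat_sprod[OF Omega_carrier Omega_orthogonal x y])

lemma Om_antisym:
  assumes x: "x \<in> carrier_vec (2*S)" and y: "y \<in> carrier_vec (2*S)"
  shows "x \<bullet> Om S y = - (Om S x \<bullet> y)"
  using sprod_transpose_mult_vec[OF Omega_carrier y x] x y
  by (simp add: Omega_transpose comm_scalar_prod[of _ "2*S"])

lemma Om_self:
  assumes x: "x \<in> carrier_vec (2*S)"
  shows "x \<bullet> Om S x = 0"
  using Om_antisym[OF x x] comm_scalar_prod[OF x Om_carrier] by simp

lemma Om_unit_vec_1:
  assumes "0 < S"
  shows "Om S (unit_vec (2*S) 1) = unit_vec (2*S) 0"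
proof (rule eq_vecI)
  fix i assume "i < dim_vec (unit_vec (2*S) 0 :: real vec)"
  then have i: "i < 2*S" by simp
  have "even i \<Longrightarrow> i + 1 < 2*S" "odd i \<Longrightarrow> i \<noteq> 0 \<and> (i - 1 = 1 \<longleftrightarrow> i = 2)"
    using i by presburger+
  then show "Om S (unit_vec (2*S) 1) $ i = unit_vec (2*S) 0 $ i"
    using i assms Om_index[OF unit_vec_carrier i, of 1] by auto
qed simp

lemma householder_Omega:
  assumes v: "v \<in> carrier_vec (2*S)"
  shows "Omega S * householder (2*S) v = householder (2*S) (Om S v) * Omega S"
proof (rule eq_matI_mult_vec[of _ "2*S" "2*S"])
  fix x :: "real vec" assume x: "x \<in> carrier_vec (2*S)"
  have "(Omega S * householder (2*S) v) *\<^sub>v x = Om S (x - (2 * (v \<bullet> x) / (v \<bullet> v)) \<cdot>\<^sub>v v)"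
    using x v by (simp add: assoc_mult_mat_vec[of _ "2*S" "2*S" _ "2*S"] householder_mult_vec)
  also have "\<dots> = Om S x - (2 * (v \<bullet> x) / (v \<bullet> v)) \<cdot>\<^sub>v Om S v"
    using x v by (simp add: mult_minus_distrib_mat_vec[of _ "2*S" "2*S"] mult_mat_vec[of _ "2*S" "2*S"])
  also have "\<dots> = (householder (2*S) (Om S v) * Omega S) *\<^sub>v x"
    using x v by (simp add: assoc_mult_mat_vec[of _ "2*S" "2*S" _ "2*S"] householder_mult_vec Om_sprod)
  finally show "(Omega S * householder (2*S) v) *\<^sub>v x = (householder (2*S) (Om S v) * Omega S) *\<^sub>v x" .
qed auto

lemma SpO_I:
  assumes W: "W \<in> carrier_mat (2*S) (2*S)" and Wo: "transpose_mat W * W = 1\<^sub>m (2*S)"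
    and comm: "W * Omega S = Omega S * W"
  shows "W \<in> SpO S"
proof -
  have "transpose_mat W * Omega S * W = (transpose_mat W * W) * Omega S"
    using W by (simp add: comm assoc_mult_mat[of _ "2*S" "2*S" _ "2*S" _ "2*S"])
  then show ?thesis using W Wo
    unfolding SpO_def symplectic_mat_def orthogonal_real_mat_def by simp
qed

lemma SpO_D:
  assumes "W \<in> SpO S"
  shows "W \<in> carrier_mat (2*S) (2*S)" and "transpose_mat W * W = 1\<^sub>m (2*S)"
    and "W * transpose_mat W = 1\<^sub>m (2*S)" and "W * Omega S = Omega S * W"
proof -
  show W: "W \<in> carrier_mat (2*S) (2*S)" and Wo: "transpose_mat W * W = 1\<^sub>m (2*S)"
    using assms unfolding SpO_def orthogonal_real_mat_def by auto
  show Wo': "W * transpose_mat W = 1\<^sub>m (2*S)" by (rule orthogonal_mat_right_inverse[OF W Wo])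
  have "transpose_mat W * Omega S * W = Omega S"
    using assms unfolding SpO_def symplectic_mat_def by auto
  then have "W * Omega S = (W * transpose_mat W) * Omega S * W"
    using W by (simp add: assoc_mult_mat[of _ "2*S" "2*S" _ "2*S" _ "2*S"])
  then show "W * Omega S = Omega S * W" using W by (simp add: Wo')
qed

lemma SpO_mult:
  assumes A: "A \<in> SpO S" and B: "B \<in> SpO S"
  shows "A * B \<in> SpO S"
proof (rule SpO_I)
  note a = SpO_D[OF A] and b = SpO_D[OF B]
  show "A * B \<in> carrier_mat (2*S) (2*S)" using a b by simp
  show "transpose_mat (A * B) * (A * B) = 1\<^sub>m (2*S)" by (rule orthogonal_mult[OF a(1) b(1) a(2) b(2)])
  have "A * B * Omega S = A * (Omega S * B)"
    using a(1) b(1) by (simp add: b(4) assoc_mult_mat[of _ "2*S" "2*S" _ "2*S" _ "2*S"])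
  also have "\<dots> = Omega S * (A * B)"
    using a(1) b(1) by (simp add: a(4) assoc_mult_mat[of _ "2*S" "2*S" _ "2*S" _ "2*S", symmetric])
  finally show "A * B * Omega S = Omega S * (A * B)" .
qed

lemma SpO_transpose:
  assumes A: "A \<in> SpO S"
  shows "transpose_mat A \<in> SpO S"
proof (rule SpO_I)
  note a = SpO_D[OF A]
  show At: "transpose_mat A \<in> carrier_mat (2*S) (2*S)" using a by simp
  show "transpose_mat (transpose_mat A) * transpose_mat A = 1\<^sub>m (2*S)" using a by simp
  note as = assoc_mult_mat[of _ "2*S" "2*S" _ "2*S" _ "2*S"]
  have "Omega S * transpose_mat A = (transpose_mat A * A) * Omega S * transpose_mat A"
    unfolding a(2) using a(1) by simp
  also have "\<dots> = transpose_mat A * (A * Omega S) * transpose_mat A" using a(1) At by (simp add: as)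
  also have "\<dots> = transpose_mat A * (Omega S * A) * transpose_mat A" unfolding a(4) ..
  also have "\<dots> = transpose_mat A * Omega S * (A * transpose_mat A)" using a(1) At by (simp add: as)
  also have "\<dots> = transpose_mat A * Omega S" unfolding a(3) using a(1) by simp
  finally show "transpose_mat A * Omega S = Omega S * transpose_mat A" by simp
qed

lemma SpO_one: "1\<^sub>m (2*S) \<in> SpO S"
  by (rule SpO_I) auto

lemma SpO_block_diag:
  assumes A: "A \<in> SpO 1" and B: "B \<in> SpO S"
  shows "block_diag A B \<in> SpO (Suc S)"
proof (rule SpO_I)
  note a = SpO_D[OF A] and b = SpO_D[OF B]
  have A2: "A \<in> carrier_mat 2 2" using a by simp
  have O1: "Omega 1 \<in> carrier_mat 2 2" using Omega_carrier[of 1] by simp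
  show "block_diag A B \<in> carrier_mat (2 * Suc S) (2 * Suc S)" using block_diag_carrier[OF A2 b(1)] by simp
  show "transpose_mat (block_diag A B) * block_diag A B = 1\<^sub>m (2 * Suc S)"
    using A2 a b by (simp add: block_diag_transpose[OF A2 b(1)] block_diag_mult[of _ 2 _ "2*S"])
  show "block_diag A B * Omega (Suc S) = Omega (Suc S) * block_diag A B"
    unfolding Omega_Suc using A2 O1 a b by (simp add: block_diag_mult[of _ 2 _ "2*S"])
qed

definition symplectic_householder :: "nat \<Rightarrow> real vec \<Rightarrow> real mat" where
  "symplectic_householder S v = householder (2*S) v * householder (2*S) (Om S v)"

lemma symplectic_householder_SpO:
  assumes v: "v \<in> carrier_vec (2*S)"
  shows "symplectic_householder S v \<in> SpO S"
proof -
  define Rv where "Rv = householder (2*S) v"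
  define Rw where "Rw = householder (2*S) (Om S v)"
  have c: "Rv \<in> carrier_mat (2*S) (2*S)" "Rw \<in> carrier_mat (2*S) (2*S)"
    by (auto simp: Rv_def Rw_def)
  note as = assoc_mult_mat[of _ "2*S" "2*S" _ "2*S" _ "2*S"]
  have comm: "Rv * Rw = Rw * Rv"
    unfolding Rv_def Rw_def by (rule householder_commute[OF v Om_carrier Om_self[OF v]])
  have O1: "Omega S * Rv = Rw * Omega S"
    unfolding Rv_def Rw_def by (rule householder_Omega[OF v])
  have O2: "Omega S * Rw = Rv * Omega S"
    using householder_Omega[OF Om_carrier, of S v] householder_uminus[OF v]
    unfolding Rv_def Rw_def Om_Om[OF v] by simp
  show ?thesis
    unfolding symplectic_householder_def Rv_def[symmetric] Rw_def[symmetric]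
  proof (rule SpO_I)
    show "Rv * Rw \<in> carrier_mat (2*S) (2*S)" using c by simp
    show "transpose_mat (Rv * Rw) * (Rv * Rw) = 1\<^sub>m (2*S)"
      using orthogonal_mult[OF c] v by (simp add: Rv_def Rw_def householder_involution)
    have "Rv * Rw * Omega S = Rv * (Rw * Omega S)" using c by (simp add: as)
    also have "\<dots> = (Rv * Omega S) * Rv" unfolding O1[symmetric] using c by (simp add: as)
    also have "\<dots> = Omega S * (Rw * Rv)" unfolding O2[symmetric] using c by (simp add: as)
    also have "\<dots> = Omega S * (Rv * Rw)" unfolding comm ..
    finally show "Rv * Rw * Omega S = Omega S * (Rv * Rw)" .
  qed
qed

definition mode_rotation :: "real \<Rightarrow> real \<Rightarrow> real mat" where
  "mode_rotation c s = mat 2 2 (\<lambda>(i,j). if i = j then c else if i = 0 then s else - s)"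

lemma mode_rotation_SpO:
  assumes cs: "c^2 + s^2 = 1"
  shows "mode_rotation c s \<in> SpO 1"
proof -
  have sum2: "\<And>f. (\<Sum>k = 0..<2. f k) = f (0::nat) + (f 1 :: real)" by (simp add: numeral_2_eq_2)
  have less2: "\<And>i::nat. i < 2 \<longleftrightarrow> i = 0 \<or> i = 1" by auto
  show ?thesis
  proof (rule SpO_I)
    show "mode_rotation c s \<in> carrier_mat (2*1) (2*1)" by (simp add: mode_rotation_def)
    show "transpose_mat (mode_rotation c s) * mode_rotation c s = 1\<^sub>m (2*1)"
      by (rule eq_matI, auto simp: mode_rotation_def scalar_prod_def sum2 less2 row_def col_def,
          insert cs, auto simp: power2_eq_square algebra_simps)
    show "mode_rotation c s * Omega 1 = Omega 1 * mode_rotation c s"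
      by (rule eq_matI, auto simp: mode_rotation_def scalar_prod_def sum2 less2 row_def col_def Omega_index)
  qed
qed

lemma sprod_supported_first2:
  fixes x y :: "real vec"
  assumes x: "x \<in> carrier_vec n" and y: "y \<in> carrier_vec n" and n: "2 \<le> n"
    and z: "\<And>i. 2 \<le> i \<Longrightarrow> i < n \<Longrightarrow> y $ i = 0"
  shows "x \<bullet> y = x$0 * y$0 + x$1 * y$1"
proof -
  have "x \<bullet> y = (\<Sum>i\<in>{0..<2} \<union> {2..<n}. x$i * y$i)"
    using y n by (simp add: scalar_prod_def ivl_disj_un_two(3))
  also have "\<dots> = (\<Sum>i\<in>{0..<2}. x$i * y$i)"
    using z by (simp add: sum.union_disjoint)
  finally show ?thesis by (simp add: numeral_2_eq_2)
qed

text \<open>The rotation sends \<open>e\<^sub>1\<close> to \<open>(s, c, 0, \<dots>)\<close>, where \<open>(s, c)\<close> is \<open>(a\<^sub>0, a\<^sub>1)\<close> normalised,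
  so that \<open>a \<bullet> \<Omega> (s, c, 0, \<dots>) = a\<^sub>0 c - a\<^sub>1 s = 0\<close>.\<close>
lemma SpO_rotation_Om_orthogonal:
  assumes S: "S \<ge> 1" and a: "a \<in> carrier_vec (2*S)"
  shows "\<exists>R \<in> SpO S. a \<bullet> Om S (R *\<^sub>v unit_vec (2*S) 1) = 0"
proof -
  have n2: "2 \<le> 2*S" and n1: "1 < 2*S" using S by auto
  obtain S0 where S0: "S = Suc S0" using S by (cases S) auto
  define r where "r = sqrt ((a$0)^2 + (a$1)^2)"
  define c where "c = (if r = 0 then 1 else a$1 / r)"
  define s where "s = (if r = 0 then 0 else a$0 / r)"
  have rr: "r^2 = (a$0)^2 + (a$1)^2" unfolding r_def by simp
  have cs: "c^2 + s^2 = 1"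
  proof (cases "r = 0")
    case False
    then have nz: "(a$0)^2 + (a$1)^2 \<noteq> 0" using rr by auto
    have "c^2 + s^2 = ((a$0)^2 + (a$1)^2) / r^2"
      unfolding c_def s_def using False by (simp add: power_divide add_divide_distrib add.commute)
    then show ?thesis using rr nz by simp
  qed (simp add: c_def s_def)
  have acs: "a$0 * c - a$1 * s = 0"
  proof (cases "r = 0")
    case True
    then have "a$0 = 0" "a$1 = 0" using rr by (simp_all add: sum_power2_eq_zero_iff)
    then show ?thesis by simp
  qed (simp add: c_def s_def field_simps)
  define R where "R = block_diag (mode_rotation c s) (1\<^sub>m (2*S0))"
  have R: "R \<in> SpO S" unfolding R_def S0 by (rule SpO_block_diag[OF mode_rotation_SpO[OF cs] SpO_one])
  have Rc: "R \<in> carrier_mat (2*S) (2*S)" using SpO_D(1)[OF R] .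
  define x0 where "x0 = vec (2*S) (\<lambda>i. if i = 0 then s else if i = 1 then c else 0)"
  have x0: "x0 \<in> carrier_vec (2*S)" by (simp add: x0_def)
  have Rx: "R *\<^sub>v unit_vec (2*S) 1 = x0"
  proof (rule eq_vecI)
    fix i assume "i < dim_vec x0"
    then have i: "i < 2*S" by (simp add: x0_def)
    show "(R *\<^sub>v unit_vec (2*S) 1) $ i = x0 $ i"
      using mult_unit_vec_index[OF Rc i n1] i S0
      by (auto simp: R_def block_diag_def x0_def mode_rotation_def)
  qed (use Rc x0 in auto)
  have Ox0: "Om S x0 = vec (2*S) (\<lambda>i. if i = 0 then c else if i = 1 then - s else 0)"
  proof (rule eq_vecI)
    fix i assume "i < dim_vec (vec (2*S) (\<lambda>i. if i = 0 then c else if i = 1 then - s else 0))"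
    then have i: "i < 2*S" by simp
    have "\<not> (odd i \<and> i - 1 = 1)" "even i \<Longrightarrow> i + 1 < 2*S" using i by presburger+
    then show "Om S x0 $ i = vec (2*S) (\<lambda>i. if i = 0 then c else if i = 1 then - s else 0) $ i"
      using i n1 Om_index[OF x0 i] by (auto simp: x0_def)
  qed simp
  have ax0: "a \<bullet> Om S x0 = 0"
    unfolding Ox0 by (subst sprod_supported_first2[OF a _ n2]) (use acs n1 in \<open>auto simp: algebra_simps\<close>)
  then show ?thesis using R Rx by blast
qed

text \<open>After the rotation, \<open>\<Omega> (x\<^sub>0 - a)\<close> is orthogonal to \<open>x\<^sub>0 = R e\<^sub>1\<close>, so the symplectic
  Householder matrix of \<open>x\<^sub>0 - a\<close> maps \<open>x\<^sub>0\<close> to \<open>a\<close>.\<close>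
lemma SpO_maps_unit_vec_1:
  assumes S: "S \<ge> 1" and a: "a \<in> carrier_vec (2*S)" and aa: "a \<bullet> a = 1"
  shows "\<exists>W \<in> SpO S. W *\<^sub>v unit_vec (2*S) 1 = a"
proof -
  obtain R where R: "R \<in> SpO S" and ax0: "a \<bullet> Om S (R *\<^sub>v unit_vec (2*S) 1) = 0"
    using SpO_rotation_Om_orthogonal[OF S a] by blast
  note r = SpO_D[OF R]
  define x0 where "x0 = R *\<^sub>v unit_vec (2*S) 1"
  have x0: "x0 \<in> carrier_vec (2*S)" unfolding x0_def using r(1) by (intro carrier_vecI) simp
  have x0x0: "x0 \<bullet> x0 = 1"
    unfolding x0_def orthogonal_mat_sprod[OF r(1,2) unit_vec_carrier unit_vec_carrier] using S by simp
  define v where "v = x0 - a"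
  have v: "v \<in> carrier_vec (2*S)" using x0 a by (simp add: v_def)
  have "v \<bullet> Om S x0 = 0"
    unfolding v_def using Om_self[OF x0] ax0[folded x0_def] x0 a by (simp add: minus_scalar_prod_distrib[of _ "2*S"])
  then have wx: "Om S v \<bullet> x0 = 0" using Om_antisym[OF v x0] by simp
  define W where "W = symplectic_householder S v * R"
  have W: "W \<in> SpO S" unfolding W_def by (rule SpO_mult[OF symplectic_householder_SpO[OF v] R])
  have "W *\<^sub>v unit_vec (2*S) 1 = householder (2*S) v *\<^sub>v (householder (2*S) (Om S v) *\<^sub>v x0)"
    unfolding W_def symplectic_householder_def x0_def using r(1)
    by (simp add: assoc_mult_mat_vec[of _ "2*S" "2*S" _ "2*S"])
  also have "\<dots> = householder (2*S) v *\<^sub>v x0"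
    by (simp only: householder_orthogonal_vec[OF Om_carrier x0 wx])
  also have "\<dots> = a"
    unfolding v_def by (rule householder_maps_unit[OF x0 a x0x0 aa])
  finally show ?thesis using W by blast
qed

section \<open>The uncertainty relation\<close>

text \<open>What the argument uses of \<open>\<Gamma> + i\<Omega> \<ge> 0\<close>; unlike that condition, it visibly survives
  congruence by SpO and passing to a diagonal block.\<close>
definition uncertainty_CM :: "nat \<Rightarrow> real mat \<Rightarrow> bool" where
  "uncertainty_CM S G \<longleftrightarrow> G \<in> carrier_mat (2*S) (2*S) \<and> transpose_mat G = G \<and>
    (\<forall>x \<in> carrier_vec (2*S). x \<noteq> 0\<^sub>v (2*S) \<longrightarrow> x \<bullet> (G *\<^sub>v x) > 0) \<and>
    (\<forall>x \<in> carrier_vec (2*S). (x \<bullet> (G *\<^sub>v x)) * (Om S x \<bullet> (G *\<^sub>v Om S x)) \<ge> (x \<bullet> x)^2)"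

lemma uncertainty_CM_D:
  assumes "uncertainty_CM S G"
  shows "G \<in> carrier_mat (2*S) (2*S)" and "transpose_mat G = G"
    and "\<And>x. x \<in> carrier_vec (2*S) \<Longrightarrow> x \<noteq> 0\<^sub>v (2*S) \<Longrightarrow> x \<bullet> (G *\<^sub>v x) > 0"
    and "\<And>x. x \<in> carrier_vec (2*S) \<Longrightarrow> (x \<bullet> (G *\<^sub>v x)) * (Om S x \<bullet> (G *\<^sub>v Om S x)) \<ge> (x \<bullet> x)^2"
  using assms unfolding uncertainty_CM_def by auto

lemma sprod_mult_mat_vec_sum:
  fixes G :: "'a :: comm_ring mat"
  assumes G: "G \<in> carrier_mat n n" and a: "a \<in> carrier_vec n" and b: "b \<in> carrier_vec n"
  shows "a \<bullet> (G *\<^sub>v b) = (\<Sum>i<n. \<Sum>j<n. a$i * G$$(i,j) * b$j)"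
  using G a b by (simp add: scalar_prod_def row_def atLeast0LessThan sum_distrib_left mult.assoc)

lemma Re_hermitian_form_real_imag:
  fixes G P :: "real mat" and a b :: "real vec"
  assumes G: "G \<in> carrier_mat n n" and P: "P \<in> carrier_mat n n"
    and a: "a \<in> carrier_vec n" and b: "b \<in> carrier_vec n"
  defines "M \<equiv> map_mat complex_of_real G + \<i> \<cdot>\<^sub>m map_mat complex_of_real P"
  defines "z \<equiv> vec n (\<lambda>i. complex_of_real (a$i) + \<i> * complex_of_real (b$i))"
  shows "Re (\<Sum>i<n. \<Sum>j<n. cnj (z $ i) * M $$ (i,j) * z $ j) =
     a \<bullet> (G *\<^sub>v a) + b \<bullet> (G *\<^sub>v b) - a \<bullet> (P *\<^sub>v b) + b \<bullet> (P *\<^sub>v a)"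
proof -
  have "Re (\<Sum>i<n. \<Sum>j<n. cnj (z $ i) * M $$ (i,j) * z $ j) =
     (\<Sum>i<n. \<Sum>j<n. a$i * G$$(i,j) * a$j + b$i * G$$(i,j) * b$j - a$i * P$$(i,j) * b$j + b$i * P$$(i,j) * a$j)"
    unfolding Re_sum using G P by (intro sum.cong refl) (simp add: M_def z_def algebra_simps)
  also have "\<dots> = a \<bullet> (G *\<^sub>v a) + b \<bullet> (G *\<^sub>v b) - a \<bullet> (P *\<^sub>v b) + b \<bullet> (P *\<^sub>v a)"
    using G P a b by (simp add: sprod_mult_mat_vec_sum sum.distrib sum_subtractf)
  finally show ?thesis .
qed

text \<open>With \<open>b = t \<Omega> x\<close>, the form is a quadratic in \<open>t\<close> that stays nonnegative; minimising over
  \<open>t\<close> gives the uncertainty inequality.\<close>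
lemma uncertainty_ineq_of_form_nonneg:
  fixes G :: "real mat"
  assumes G: "G \<in> carrier_mat (2*S) (2*S)"
    and pos: "\<And>x. x \<in> carrier_vec (2*S) \<Longrightarrow> x \<noteq> 0\<^sub>v (2*S) \<Longrightarrow> x \<bullet> (G *\<^sub>v x) > 0"
    and form_nonneg: "\<And>a b. a \<in> carrier_vec (2*S) \<Longrightarrow> b \<in> carrier_vec (2*S) \<Longrightarrow>
      a \<bullet> (G *\<^sub>v a) + b \<bullet> (G *\<^sub>v b) - a \<bullet> (Om S b) + b \<bullet> (Om S a) \<ge> 0"
    and x: "x \<in> carrier_vec (2*S)"
  shows "(x \<bullet> (G *\<^sub>v x)) * (Om S x \<bullet> (G *\<^sub>v Om S x)) \<ge> (x \<bullet> x)^2"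
proof (cases "x = 0\<^sub>v (2*S)")
  case False
  define A where "A = x \<bullet> (G *\<^sub>v x)"
  define B where "B = Om S x \<bullet> (G *\<^sub>v Om S x)"
  define c where "c = x \<bullet> x"
  have A: "A > 0" using pos[OF x False] by (simp add: A_def)
  have "Om S x \<noteq> 0\<^sub>v (2*S)"
    using Om_sprod[OF x x] False real_sprod_self_eq_0_iff[OF x] real_sprod_self_eq_0_iff[OF Om_carrier]
    by metis
  then have B: "B > 0" using pos[OF Om_carrier] by (simp add: B_def)
  define t where "t = - c / B"
  define b where "b = t \<cdot>\<^sub>v Om S x"
  have b: "b \<in> carrier_vec (2*S)" by (simp add: b_def)
  have Gb: "b \<bullet> (G *\<^sub>v b) = t * t * B" unfolding b_def B_def using G
    by (simp add: mult_mat_vec[of _ "2*S" "2*S"] scalar_prod_smult_distrib[of _ "2*S"] smult_scalar_prod_distrib[of _ "2*S"])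
  have "Om S b = t \<cdot>\<^sub>v (- x)" unfolding b_def Om_Om[OF x, symmetric] by (simp add: mult_mat_vec[of _ "2*S" "2*S"])
  then have xOb: "x \<bullet> Om S b = - t * c"
    using x unfolding c_def by (simp add: scalar_prod_smult_distrib[of _ "2*S"] scalar_prod_uminus_right)
  have bOx: "b \<bullet> Om S x = t * c" unfolding b_def c_def using x by (simp add: Om_sprod[OF x x])
  have "0 \<le> A + t * t * B + 2 * t * c"
    using form_nonneg[OF x b] unfolding Gb xOb bOx A_def by (simp add: algebra_simps)
  also have "\<dots> = A - c * c / B" unfolding t_def using B
    by (simp add: field_simps power2_eq_square)
  finally have "c * c \<le> A * B" using B by (simp add: field_simps)
  then show ?thesis unfolding A_def B_def c_def by (simp add: power2_eq_square)
qed (use G in simp)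

lemma quantum_CM_imp_uncertainty_CM:
  assumes Q: "quantum_CM S G"
  shows "uncertainty_CM S G"
proof -
  let ?n = "2*S"
  have G: "G \<in> carrier_mat ?n ?n" and sym: "transpose_mat G = G"
    and pos: "\<forall>x \<in> carrier_vec ?n. x \<noteq> 0\<^sub>v ?n \<longrightarrow> x \<bullet> (G *\<^sub>v x) > 0"
    and psd: "hermitian_psd ?n (map_mat complex_of_real G + \<i> \<cdot>\<^sub>m map_mat complex_of_real (Omega S))"
    using Q unfolding quantum_CM_def by auto
  have form_nonneg: "a \<bullet> (G *\<^sub>v a) + b \<bullet> (G *\<^sub>v b) - a \<bullet> (Om S b) + b \<bullet> (Om S a) \<ge> 0"
    if a: "a \<in> carrier_vec ?n" and b: "b \<in> carrier_vec ?n" for a b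
  proof -
    define z where "z = vec ?n (\<lambda>i. complex_of_real (a$i) + \<i> * complex_of_real (b$i))"
    have "z \<in> carrier_vec ?n" by (simp add: z_def)
    then have "Re (\<Sum>i<?n. \<Sum>j<?n. cnj (z $ i) *
        (map_mat complex_of_real G + \<i> \<cdot>\<^sub>m map_mat complex_of_real (Omega S)) $$ (i,j) * z $ j) \<ge> 0"
      using psd unfolding hermitian_psd_def Let_def by blast
    then show ?thesis unfolding z_def Re_hermitian_form_real_imag[OF G Omega_carrier a b] .
  qed
  then show ?thesis
    unfolding uncertainty_CM_def using G sym pos uncertainty_ineq_of_form_nonneg[OF G] by blast
qed

lemma uncertainty_CM_SpO_congruence:
  assumes Q: "uncertainty_CM S G" and W: "W \<in> SpO S"
  shows "uncertainty_CM S (transpose_mat W * G * W)"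
proof -
  let ?n = "2*S" and ?Gt = "transpose_mat W * G * W"
  note w = SpO_D[OF W] and q = uncertainty_CM_D[OF Q]
  have Wx: "W *\<^sub>v x \<in> carrier_vec ?n" for x using w by (intro carrier_vecI) simp
  have quad: "x \<bullet> (?Gt *\<^sub>v x) = (W *\<^sub>v x) \<bullet> (G *\<^sub>v (W *\<^sub>v x))" if x: "x \<in> carrier_vec ?n" for x
  proof -
    have "?Gt *\<^sub>v x = transpose_mat W *\<^sub>v (G *\<^sub>v (W *\<^sub>v x))"
      using w q(1) x by (simp add: assoc_mult_mat_vec[of _ ?n ?n _ ?n])
    moreover have "G *\<^sub>v (W *\<^sub>v x) \<in> carrier_vec ?n" using q(1) by (intro carrier_vecI) simp
    ultimately show ?thesis using sprod_transpose_mult_vec[OF w(1) x] by simp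
  qed
  have norm: "(W *\<^sub>v x) \<bullet> (W *\<^sub>v x) = x \<bullet> x" if "x \<in> carrier_vec ?n" for x
    by (rule orthogonal_mat_sprod[OF w(1) w(2) that that])
  have comm: "Om S (W *\<^sub>v x) = W *\<^sub>v Om S x" if "x \<in> carrier_vec ?n" for x
    using w that by (simp add: assoc_mult_mat_vec[of _ ?n ?n _ ?n, symmetric])
  have pos: "x \<bullet> (?Gt *\<^sub>v x) > 0" if x: "x \<in> carrier_vec ?n" and nz: "x \<noteq> 0\<^sub>v ?n" for x
  proof -
    have "W *\<^sub>v x \<noteq> 0\<^sub>v ?n"
      using norm[OF x] nz real_sprod_self_eq_0_iff[OF x] by auto
    then show ?thesis unfolding quad[OF x] using q(3)[OF Wx] by simp
  qed
  have "(x \<bullet> (?Gt *\<^sub>v x)) * (Om S x \<bullet> (?Gt *\<^sub>v Om S x)) \<ge> (x \<bullet> x)^2" if x: "x \<in> carrier_vec ?n" for x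
    using q(4)[OF Wx, of x] unfolding quad[OF x] quad[OF Om_carrier] comm[OF x] norm[OF x] .
  then show ?thesis unfolding uncertainty_CM_def
    using w q pos symmetric_congruence[OF w(1) q(1) q(2)] by simp
qed

lemma uncertainty_CM_block_diag_lower:
  assumes Q: "uncertainty_CM (Suc S) (block_diag D G)"
    and D: "D \<in> carrier_mat 2 2" and G: "G \<in> carrier_mat (2*S) (2*S)"
  shows "uncertainty_CM S G"
proof -
  let ?m = "2*S"
  define pad :: "real vec \<Rightarrow> real vec" where "pad y = 0\<^sub>v 2 @\<^sub>v y" for y
  note q = uncertainty_CM_D[OF Q]
  have pad: "pad y \<in> carrier_vec (2 * Suc S)" if "y \<in> carrier_vec ?m" for y
    using append_carrier_vec[OF zero_carrier_vec[of 2] that] by (simp add: pad_def)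
  have pad_sprod: "pad y \<bullet> pad z = y \<bullet> z" if "y \<in> carrier_vec ?m" "z \<in> carrier_vec ?m" for y z
    unfolding pad_def using that by (subst scalar_prod_append[of _ 2 _ ?m]) auto
  have block_pad: "block_diag A B *\<^sub>v pad y = pad (B *\<^sub>v y)"
    if A: "A \<in> carrier_mat 2 2" and B: "B \<in> carrier_mat ?m ?m" and y: "y \<in> carrier_vec ?m" for A B y
  proof -
    have "A *\<^sub>v 0\<^sub>v 2 = 0\<^sub>v 2" using A by (intro eq_vecI) auto
    then show ?thesis unfolding pad_def using block_diag_mult_append_vec[OF A B _ y] by simp
  qed
  have Om_pad: "Om (Suc S) (pad y) = pad (Om S y)" if "y \<in> carrier_vec ?m" for y
    unfolding Omega_Suc by (rule block_pad[OF _ _ that]) (use Omega_carrier[of 1] in auto)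
  have Gy: "G *\<^sub>v y \<in> carrier_vec ?m" for y using G by (intro carrier_vecI) simp
  have quad: "pad y \<bullet> (block_diag D G *\<^sub>v pad y) = y \<bullet> (G *\<^sub>v y)" if y: "y \<in> carrier_vec ?m" for y
    unfolding block_pad[OF D G y] by (rule pad_sprod[OF y Gy])
  have pos: "y \<bullet> (G *\<^sub>v y) > 0" if y: "y \<in> carrier_vec ?m" and nz: "y \<noteq> 0\<^sub>v ?m" for y
  proof -
    have "pad y \<noteq> 0\<^sub>v (2 * Suc S)"
    proof
      assume "pad y = 0\<^sub>v (2 * Suc S)"
      then have "y \<bullet> y = 0" using pad_sprod[OF y y] by simp
      with nz show False using real_sprod_self_eq_0_iff[OF y] by simp
    qed
    then show ?thesis using q(3)[OF pad[OF y]] quad[OF y] by simp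
  qed
  have ineq: "(y \<bullet> (G *\<^sub>v y)) * (Om S y \<bullet> (G *\<^sub>v Om S y)) \<ge> (y \<bullet> y)^2"
    if y: "y \<in> carrier_vec ?m" for y
    using q(4)[OF pad[OF y]] unfolding Om_pad[OF y] quad[OF y] quad[OF Om_carrier] pad_sprod[OF y y] .
  show ?thesis unfolding uncertainty_CM_def
    using G pos ineq symmetric_block_diag_lower[OF D G q(2)] by blast
qed

section \<open>Rayleigh quotients and splitting off a mode\<close>

locale orthogonal_diagonalization =
  fixes n :: nat and G U :: "real mat" and Lam :: "real list"
  assumes G: "G \<in> carrier_mat n n" and U: "U \<in> carrier_mat n n"
    and U_orth: "transpose_mat U * U = 1\<^sub>m n"
    and U_diag: "transpose_mat U * G * U = mat_diag n ((!) Lam)"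
    and length_Lam: "length Lam = n"
begin

definition coord :: "real vec \<Rightarrow> real vec" where
  "coord x = transpose_mat U *\<^sub>v x"

lemma coord_dim[simp]: "dim_vec (coord x) = n"
  unfolding coord_def using U by simp

lemma coord_carrier[simp]: "coord x \<in> carrier_vec n"
  unfolding coord_def using U by (intro carrier_vecI) simp

lemma U_coord:
  assumes "x \<in> carrier_vec n"
  shows "U *\<^sub>v coord x = x"
  unfolding coord_def using U assms orthogonal_mat_right_inverse[OF U U_orth]
  by (simp add: assoc_mult_mat_vec[of _ n n _ n, symmetric])

lemma coord_U:
  assumes "c \<in> carrier_vec n"
  shows "coord (U *\<^sub>v c) = c"
  unfolding coord_def using U assms U_orth by (simp add: assoc_mult_mat_vec[of _ n n _ n, symmetric])

lemma coord_index:
  assumes y: "y \<in> carrier_vec n" and i: "i < n"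
  shows "coord y $ i = (U *\<^sub>v unit_vec n i) \<bullet> y"
  unfolding coord_def using sprod_transpose_mult_vec[OF U unit_vec_carrier y, of i] i y U
  by (simp add: comm_scalar_prod[of _ n] scalar_prod_right_unit)

lemma G_mult_vec:
  assumes x: "x \<in> carrier_vec n"
  shows "G *\<^sub>v x = U *\<^sub>v vec n (\<lambda>i. Lam ! i * coord x $ i)"
proof -
  have "G = U * mat_diag n ((!) Lam) * transpose_mat U"
    using orthogonal_congruence_inverse[OF U U_orth G] U by (simp add: U_diag)
  then have "G *\<^sub>v x = U *\<^sub>v (mat_diag n ((!) Lam) *\<^sub>v coord x)"
    unfolding coord_def using U x by (simp add: assoc_mult_mat_vec[of _ n n _ n])
  also have "mat_diag n ((!) Lam) *\<^sub>v coord x = vec n (\<lambda>i. Lam ! i * coord x $ i)"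
  proof (rule eq_vecI)
    fix i assume "i < dim_vec (vec n (\<lambda>i. Lam ! i * coord x $ i))"
    then have i: "i < n" by simp
    have "(mat_diag n ((!) Lam) *\<^sub>v coord x) $ i = (\<Sum>k = 0..<n. (if i = k then Lam ! k else 0) * coord x $ k)"
      using i by (simp add: mat_diag_def scalar_prod_def row_def)
    also have "\<dots> = (\<Sum>k = 0..<n. (if i = k then 1 else 0) * (Lam ! i * coord x $ k))"
      by (rule sum.cong) auto
    finally show "(mat_diag n ((!) Lam) *\<^sub>v coord x) $ i = vec n (\<lambda>i. Lam ! i * coord x $ i) $ i"
      using i by (simp add: sum_delta_mult(1))
  qed simp
  finally show ?thesis .
qed

lemma sprod_coord:
  assumes "x \<in> carrier_vec n" and "y \<in> carrier_vec n"
  shows "x \<bullet> y = coord x \<bullet> coord y"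
  using orthogonal_mat_sprod[OF U U_orth coord_carrier coord_carrier, of x y] U_coord assms by simp

lemma quadratic_form_coord:
  assumes x: "x \<in> carrier_vec n"
  shows "x \<bullet> (G *\<^sub>v x) = (\<Sum>i = 0..<n. Lam ! i * (coord x $ i * coord x $ i))"
proof -
  have "x \<bullet> (G *\<^sub>v x) = coord x \<bullet> vec n (\<lambda>i. Lam ! i * coord x $ i)"
    using sprod_coord[OF x] coord_U[of "vec n (\<lambda>i. Lam ! i * coord x $ i)"] U
    by (simp add: G_mult_vec[OF x] mult_mat_vec_carrier)
  then show ?thesis by (simp add: scalar_prod_def algebra_simps)
qed

lemma eigenvector_if_coord_support:
  assumes x: "x \<in> carrier_vec n" and supp: "\<And>i. i < n \<Longrightarrow> coord x $ i \<noteq> 0 \<Longrightarrow> Lam ! i = \<mu>"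
  shows "G *\<^sub>v x = \<mu> \<cdot>\<^sub>v x"
proof -
  have "vec n (\<lambda>i. Lam ! i * coord x $ i) = \<mu> \<cdot>\<^sub>v coord x"
    by (rule eq_vecI) (use supp in auto)
  then show ?thesis
    using U x by (simp add: G_mult_vec mult_mat_vec[of _ n n] U_coord)
qed

lemma eigenbasis_vec:
  assumes i: "i < n"
  shows "U *\<^sub>v unit_vec n i \<in> carrier_vec n" and "coord (U *\<^sub>v unit_vec n i) = unit_vec n i"
    and "(U *\<^sub>v unit_vec n i) \<bullet> (U *\<^sub>v unit_vec n i) = 1"
    and "G *\<^sub>v (U *\<^sub>v unit_vec n i) = Lam ! i \<cdot>\<^sub>v (U *\<^sub>v unit_vec n i)"
proof -
  show c: "U *\<^sub>v unit_vec n i \<in> carrier_vec n" using U by (intro carrier_vecI) simp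
  show co: "coord (U *\<^sub>v unit_vec n i) = unit_vec n i" by (rule coord_U) simp
  show "(U *\<^sub>v unit_vec n i) \<bullet> (U *\<^sub>v unit_vec n i) = 1"
    using orthogonal_mat_sprod[OF U U_orth, of "unit_vec n i" "unit_vec n i"] i by simp
  show "G *\<^sub>v (U *\<^sub>v unit_vec n i) = Lam ! i \<cdot>\<^sub>v (U *\<^sub>v unit_vec n i)"
    by (rule eigenvector_if_coord_support[OF c]) (use co i in \<open>auto split: if_splits\<close>)
qed

lemma eigenvalue_pos:
  assumes pos: "\<And>x. x \<in> carrier_vec n \<Longrightarrow> x \<noteq> 0\<^sub>v n \<Longrightarrow> x \<bullet> (G *\<^sub>v x) > 0" and i: "i < n"
  shows "Lam ! i > 0"
proof -
  let ?u = "U *\<^sub>v unit_vec n i"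
  note b = eigenbasis_vec[OF i]
  have "?u \<noteq> 0\<^sub>v n" using b(1,3) by auto
  then have "?u \<bullet> (G *\<^sub>v ?u) > 0" using pos b(1) by simp
  then show ?thesis using b(1,3,4) by simp
qed

lemma rayleigh_le_and_eq:
  assumes sorted: "sorted_wrt (\<ge>) Lam" and k: "k < n" and x: "x \<in> carrier_vec n"
    and z: "\<And>i. i < k \<Longrightarrow> coord x $ i = 0"
  shows "x \<bullet> (G *\<^sub>v x) \<le> Lam ! k * (x \<bullet> x)"
    and "x \<bullet> (G *\<^sub>v x) = Lam ! k * (x \<bullet> x) \<Longrightarrow> G *\<^sub>v x = Lam ! k \<cdot>\<^sub>v x"
proof -
  let ?c = "coord x"
  have term_nonneg: "0 \<le> (Lam ! k - Lam ! i) * (?c $ i * ?c $ i)" if "i < n" for i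
  proof (cases "i < k")
    case False
    then have "Lam ! i \<le> Lam ! k"
      using sorted that length_Lam by (cases "i = k") (auto simp: sorted_wrt_iff_nth_less)
    then show ?thesis by simp
  qed (simp add: z)
  have diff: "Lam ! k * (x \<bullet> x) - x \<bullet> (G *\<^sub>v x) = (\<Sum>i = 0..<n. (Lam ! k - Lam ! i) * (?c $ i * ?c $ i))"
    unfolding quadratic_form_coord[OF x] sprod_coord[OF x x]
    by (simp add: scalar_prod_def sum_distrib_left sum_subtractf algebra_simps)
  have "0 \<le> (\<Sum>i = 0..<n. (Lam ! k - Lam ! i) * (?c $ i * ?c $ i))"
    by (rule sum_nonneg) (use term_nonneg in auto)
  then show "x \<bullet> (G *\<^sub>v x) \<le> Lam ! k * (x \<bullet> x)" using diff by simp
  assume "x \<bullet> (G *\<^sub>v x) = Lam ! k * (x \<bullet> x)"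
  then have "(\<Sum>i = 0..<n. (Lam ! k - Lam ! i) * (?c $ i * ?c $ i)) = 0" using diff by simp
  then have "(Lam ! k - Lam ! i) * (?c $ i * ?c $ i) = 0" if "i < n" for i
    using sum_nonneg_eq_0_iff[of "{0..<n}" "\<lambda>i. (Lam ! k - Lam ! i) * (?c $ i * ?c $ i)"] term_nonneg that
    by auto
  then show "G *\<^sub>v x = Lam ! k \<cdot>\<^sub>v x"
    by (intro eigenvector_if_coord_support[OF x]) (metis mult_eq_0_iff right_minus_eq)
qed

end

definition symplectic_eigenpair :: "nat \<Rightarrow> real mat \<Rightarrow> real \<Rightarrow> real \<Rightarrow> real vec \<Rightarrow> bool" where
  "symplectic_eigenpair S G \<alpha> \<beta> a \<longleftrightarrow> a \<in> carrier_vec (2*S) \<and> a \<bullet> a = 1 \<and>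
     G *\<^sub>v a = \<beta> \<cdot>\<^sub>v a \<and> G *\<^sub>v Om S a = \<alpha> \<cdot>\<^sub>v Om S a"

lemma product_squeeze:
  fixes A B p q :: real
  assumes A: "0 < A" "A \<le> p" and B: "0 < B" "B \<le> q" and pq: "p * q = 1" and AB: "A * B \<ge> 1"
  shows "A = p" and "B = q"
proof -
  have "A * B \<le> p * B" "p * B \<le> p * q" using A B by (simp_all add: mult_right_mono mult_left_mono)
  then have "A * B = p * B" "p * B = p * q" using AB pq by linarith+
  then show "A = p" "B = q" using A B by simp_all
qed

text \<open>This is where purity enters: if \<open>\<lambda>\<^sub>p \<lambda>\<^sub>q = 1\<close>, the Rayleigh bounds \<open>a\<^sup>T\<Gamma>a \<le> \<lambda>\<^sub>q\<close> and
  \<open>(\<Omega>a)\<^sup>T\<Gamma>(\<Omega>a) \<le> \<lambda>\<^sub>p\<close> meet the uncertainty inequality, so both are equalities.\<close>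
lemma (in orthogonal_diagonalization) symplectic_eigenpair_of_pure_pair:
  assumes n: "n = 2*S" and Q: "uncertainty_CM S G" and sorted: "sorted_wrt (\<ge>) Lam"
    and a: "a \<in> carrier_vec n" and aa: "a \<bullet> a = 1"
    and p: "p < n" and q: "q < n" and pq: "Lam ! p * Lam ! q = 1"
    and za: "\<And>i. i < q \<Longrightarrow> coord a $ i = 0"
    and zo: "\<And>i. i < p \<Longrightarrow> coord (Om S a) $ i = 0"
  shows "symplectic_eigenpair S G (Lam ! p) (Lam ! q) a"
proof -
  let ?y = "Om S a"
  note unc = uncertainty_CM_D[OF Q, folded n]
  have y: "?y \<in> carrier_vec n" and yy: "?y \<bullet> ?y = 1" using Om_sprod[OF a[unfolded n] a[unfolded n]] aa n by simp_all
  have "a \<noteq> 0\<^sub>v n" "?y \<noteq> 0\<^sub>v n" using aa yy by auto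
  then have A: "a \<bullet> (G *\<^sub>v a) > 0" and B: "?y \<bullet> (G *\<^sub>v ?y) > 0"
    using unc(3)[OF a] unc(3)[OF y] by auto
  have Ab: "a \<bullet> (G *\<^sub>v a) \<le> Lam ! q" using rayleigh_le_and_eq(1)[OF sorted q a za] aa by simp
  have Bb: "?y \<bullet> (G *\<^sub>v ?y) \<le> Lam ! p" using rayleigh_le_and_eq(1)[OF sorted p y zo] yy by simp
  have AB: "(a \<bullet> (G *\<^sub>v a)) * (?y \<bullet> (G *\<^sub>v ?y)) \<ge> 1" using unc(4)[OF a] aa n by simp
  have qp: "Lam ! q * Lam ! p = 1" using pq by (simp add: mult.commute)
  note eq = product_squeeze[OF A Ab B Bb qp AB]
  have "a \<bullet> (G *\<^sub>v a) = Lam ! q * (a \<bullet> a)" "?y \<bullet> (G *\<^sub>v ?y) = Lam ! p * (?y \<bullet> ?y)"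
    using eq aa yy by simp_all
  then have "G *\<^sub>v a = Lam ! q \<cdot>\<^sub>v a" "G *\<^sub>v ?y = Lam ! p \<cdot>\<^sub>v ?y"
    using rayleigh_le_and_eq(2)[OF sorted q a za] rayleigh_le_and_eq(2)[OF sorted p y zo] by simp_all
  then show ?thesis unfolding symplectic_eigenpair_def using a aa n by simp
qed

lemma (in orthogonal_diagonalization) symplectic_eigenpair_outer:
  assumes n: "n = 2*S" and Q: "uncertainty_CM S G" and sorted: "sorted_wrt (\<ge>) Lam"
    and S: "S \<ge> 1" and pure: "Lam ! 0 * Lam ! (2*S-1) = 1"
  shows "\<exists>a. symplectic_eigenpair S G (Lam ! 0) (Lam ! (2*S-1)) a"
proof -
  have q: "2*S-1 < n" and p: "0 < n" using S n by auto
  note b = eigenbasis_vec[OF q]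
  show ?thesis
    using symplectic_eigenpair_of_pure_pair[OF n Q sorted b(1) b(3) p q pure] b(2) q by auto
qed

lemma (in orthogonal_diagonalization) symplectic_eigenpair_single_mode:
  assumes n: "n = 2"
  shows "\<exists>a. symplectic_eigenpair 1 G (Lam ! 0) (Lam ! 1) a"
proof -
  have one: "1 < n" using n by simp
  note b = eigenbasis_vec[OF one]
  let ?a = "U *\<^sub>v unit_vec n 1"
  have a: "?a \<in> carrier_vec (2*1)" using b(1) n by simp
  have y: "Om 1 ?a \<in> carrier_vec n" using Om_carrier[of 1 ?a] n by simp
  have "coord (Om 1 ?a) $ 1 = 0"
    using coord_index[OF y one] Om_self[OF a] by simp
  then have "G *\<^sub>v Om 1 ?a = Lam ! 0 \<cdot>\<^sub>v Om 1 ?a"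
    by (intro eigenvector_if_coord_support[OF y]) (metis One_nat_def less_2_cases n)
  then show ?thesis unfolding symplectic_eigenpair_def using a b(3,4) n by auto
qed

text \<open>If only \<open>(\<lambda>\<^sub>1, \<lambda>\<^sub>2\<^sub>S\<^sub>-\<^sub>2)\<close> is pure, choose \<open>a\<close> in the span of the last two eigenvectors with
  \<open>\<Omega>a\<close> orthogonal to the first one; the span is two-dimensional, so such \<open>a\<close> exists.\<close>
lemma (in orthogonal_diagonalization) symplectic_eigenpair_inner:
  assumes n: "n = 2*S" and Q: "uncertainty_CM S G" and sorted: "sorted_wrt (\<ge>) Lam"
    and S: "S \<ge> 2" and pure: "Lam ! 1 * Lam ! (2*S-2) = 1"
  shows "\<exists>a. symplectic_eigenpair S G (Lam ! 1) (Lam ! (2*S-2)) a"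
proof -
  have i0: "0 < n" and i2: "n - 2 < n" and i3: "n - 1 < n" and i1: "1 < n" and d23: "n - 2 \<noteq> n - 1"
    using S n by auto
  define e2 where "e2 = (unit_vec n (n - 2) :: real vec)"
  define e3 where "e3 = (unit_vec n (n - 1) :: real vec)"
  have e2: "e2 \<in> carrier_vec n" and e3: "e3 \<in> carrier_vec n" by (auto simp: e2_def e3_def)
  define u0 where "u0 = U *\<^sub>v unit_vec n 0"
  have u0: "u0 \<in> carrier_vec n" unfolding u0_def using U by (intro carrier_vecI) simp
  have Ue: "U *\<^sub>v e \<in> carrier_vec n" if "e \<in> carrier_vec n" for e using U by (intro carrier_vecI) simp
  define M1 where "M1 = u0 \<bullet> Om S (U *\<^sub>v e2)"
  define M2 where "M2 = u0 \<bullet> Om S (U *\<^sub>v e3)"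
  define c1 where "c1 = (if M1 = 0 \<and> M2 = 0 then 1 else M2)"
  define c2 where "c2 = (if M1 = 0 \<and> M2 = 0 then 0 else - M1)"
  have cM: "c1 * M1 + c2 * M2 = 0" unfolding c1_def c2_def by auto
  have cpos: "c1 * c1 + c2 * c2 > 0"
    unfolding c1_def c2_def by (auto simp: sum_squares_gt_zero_iff)
  define cv where "cv = c1 \<cdot>\<^sub>v e2 + c2 \<cdot>\<^sub>v e3"
  have cv: "cv \<in> carrier_vec n" unfolding cv_def using e2 e3 by simp
  have cvi: "\<And>i. i < n - 2 \<Longrightarrow> cv $ i = 0" unfolding cv_def e2_def e3_def by auto
  have cvcv: "cv \<bullet> cv = c1 * c1 + c2 * c2"
    unfolding cv_def using e2 e3 i2 i3 d23
    by (simp add: add_scalar_prod_distrib[of _ n] scalar_prod_add_distrib[of _ n] e2_def e3_def)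
  define k where "k = 1 / sqrt (cv \<bullet> cv)"
  define a where "a = U *\<^sub>v (k \<cdot>\<^sub>v cv)"
  have kcv: "k \<cdot>\<^sub>v cv \<in> carrier_vec n" using cv by simp
  have a: "a \<in> carrier_vec n" unfolding a_def by (rule Ue[OF kcv])
  have "a \<bullet> a = k * k * (cv \<bullet> cv)"
    unfolding a_def orthogonal_mat_sprod[OF U U_orth kcv kcv] using cv by simp
  then have aa: "a \<bullet> a = 1" unfolding k_def using cpos cvcv by (auto simp: sum_squares_gt_zero_iff)
  have za: "\<And>i. i < n - 2 \<Longrightarrow> coord a $ i = 0"
    unfolding a_def coord_U[OF kcv] using cvi cv by simp
  have "Om S a = k \<cdot>\<^sub>v (c1 \<cdot>\<^sub>v Om S (U *\<^sub>v e2) + c2 \<cdot>\<^sub>v Om S (U *\<^sub>v e3))"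
    unfolding a_def cv_def using U e2 e3 n
    by (simp add: mult_add_distrib_mat_vec[of _ n n] mult_mat_vec[of _ n n])
  then have "coord (Om S a) $ 0 = k * (c1 * M1 + c2 * M2)"
    unfolding coord_index[OF Om_carrier[of S a, folded n] i0] u0_def[symmetric] M1_def M2_def
    using u0 n by (simp add: scalar_prod_add_distrib[of _ n])
  then have zo: "\<And>i. i < 1 \<Longrightarrow> coord (Om S a) $ i = 0" using cM by simp
  show ?thesis
    using symplectic_eigenpair_of_pure_pair[OF n Q sorted a aa i1 i2 _ za zo] pure n by auto
qed

lemma split_off_mode:
  assumes Q: "uncertainty_CM (Suc S) G" and ap: "symplectic_eigenpair (Suc S) G \<alpha> \<beta> a"
  shows "\<exists>W \<in> SpO (Suc S). \<exists>G1. G1 \<in> carrier_mat (2*S) (2*S) \<and>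
    transpose_mat W * G * W = block_diag (mat_diag 2 ((!) [\<alpha>, \<beta>])) G1 \<and> uncertainty_CM S G1 \<and>
    char_poly G = [:- \<alpha>, 1:] * ([:- \<beta>, 1:] * char_poly G1)"
proof -
  let ?n = "2 * Suc S"
  have a: "a \<in> carrier_vec ?n" and aa: "a \<bullet> a = 1"
    and Ga: "G *\<^sub>v a = \<beta> \<cdot>\<^sub>v a" and GOa: "G *\<^sub>v Om (Suc S) a = \<alpha> \<cdot>\<^sub>v Om (Suc S) a"
    using ap unfolding symplectic_eigenpair_def by auto
  note q = uncertainty_CM_D[OF Q]
  obtain W where W: "W \<in> SpO (Suc S)" and We1: "W *\<^sub>v unit_vec ?n 1 = a"
    using SpO_maps_unit_vec_1[OF _ a aa] by auto
  note w = SpO_D[OF W]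
  have "(W * Omega (Suc S)) *\<^sub>v unit_vec ?n 1 = W *\<^sub>v Om (Suc S) (unit_vec ?n 1)"
    by (rule assoc_mult_mat_vec) (use w(1) in auto)
  then have "W *\<^sub>v unit_vec ?n 0 = (W * Omega (Suc S)) *\<^sub>v unit_vec ?n 1"
    using Om_unit_vec_1[of "Suc S"] by simp
  also have "\<dots> = Om (Suc S) a"
    unfolding w(4) We1[symmetric] by (rule assoc_mult_mat_vec) (use w(1) in auto)
  finally have We0: "W *\<^sub>v unit_vec ?n 0 = Om (Suc S) a" .
  define Gt where "Gt = transpose_mat W * G * W"
  define G1 where "G1 = mat (2*S) (2*S) (\<lambda>(i,j). Gt $$ (i+2, j+2))"
  have G1: "G1 \<in> carrier_mat (2*S) (2*S)" by (simp add: G1_def)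
  have nS: "?n = 2 + 2*S" by simp
  have eig: "G *\<^sub>v (W *\<^sub>v unit_vec (2 + 2*S) i) = [\<alpha>, \<beta>] ! i \<cdot>\<^sub>v (W *\<^sub>v unit_vec (2 + 2*S) i)"
    if "i < 2" for i
    using that We0 We1 Ga GOa by (auto simp: less_2_cases_iff nS[symmetric])
  have Gt_blk: "Gt = block_diag (mat_diag 2 ((!) [\<alpha>, \<beta>])) G1"
    unfolding Gt_def G1_def
    using orthogonal_deflation[of G 2 "2*S" W "(!) [\<alpha>, \<beta>]"] q(1,2) w(1,2) eig nS by simp
  have "uncertainty_CM (Suc S) (block_diag (mat_diag 2 ((!) [\<alpha>, \<beta>])) G1)"
    using uncertainty_CM_SpO_congruence[OF Q W] Gt_blk by (simp add: Gt_def)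
  then have Q1: "uncertainty_CM S G1"
    by (rule uncertainty_CM_block_diag_lower[OF _ mat_diag_dim G1])
  have "char_poly G = char_poly Gt"
    unfolding Gt_def by (rule char_poly_orthogonal_congruence[OF w(1,2) q(1), symmetric])
  also have "\<dots> = char_poly (mat_diag 2 ((!) [\<alpha>, \<beta>])) * char_poly G1"
    unfolding Gt_blk by (rule char_poly_block_diag[OF mat_diag_dim G1])
  also have "char_poly (mat_diag 2 ((!) [\<alpha>, \<beta>])) = [:- \<alpha>, 1:] * [:- \<beta>, 1:]"
    unfolding char_poly_mat_diag by (simp add: numeral_2_eq_2 del: mult_pCons_left)
  also have "\<dots> * char_poly G1 = [:- \<alpha>, 1:] * ([:- \<beta>, 1:] * char_poly G1)"
    by (rule mult.assoc)
  finally show ?thesis using W G1 Gt_blk Q1 unfolding Gt_def by blast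
qed

lemma SpO_congruent_of_block_diag:
  fixes G G' G1 G1' W1 W1' W2 D :: "real mat"
  assumes W1: "W1 \<in> SpO (Suc S)" and W1': "W1' \<in> SpO (Suc S)" and W2: "W2 \<in> SpO S"
    and D: "D \<in> carrier_mat 2 2" and G1: "G1 \<in> carrier_mat (2*S) (2*S)"
    and G: "G \<in> carrier_mat (2*Suc S) (2*Suc S)" and G': "G' \<in> carrier_mat (2*Suc S) (2*Suc S)"
    and E1: "transpose_mat W1 * G * W1 = block_diag D G1"
    and E1': "transpose_mat W1' * G' * W1' = block_diag D G1'"
    and E2: "G1' = W2 * G1 * transpose_mat W2"
  shows "\<exists>W \<in> SpO (Suc S). G' = W * G * transpose_mat W"
proof -
  let ?n = "2 * Suc S" and ?m = "2 * S"
  note w1 = SpO_D[OF W1] and w1' = SpO_D[OF W1'] and w2 = SpO_D[OF W2]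
  note as = assoc_mult_mat[of _ ?n ?n _ ?n _ ?n]
  define B where "B = block_diag (1\<^sub>m 2) W2"
  have B: "B \<in> SpO (Suc S)" unfolding B_def using SpO_block_diag[OF SpO_one[of 1] W2] by simp
  note b = SpO_D[OF B]
  have Bt: "transpose_mat B = block_diag (1\<^sub>m 2) (transpose_mat W2)"
    unfolding B_def using block_diag_transpose[of "1\<^sub>m 2" 2 W2 ?m] w2 by simp
  have "block_diag D G1' = B * block_diag D G1 * transpose_mat B"
    unfolding Bt unfolding B_def E2 using D G1 w2 by (simp add: block_diag_mult[of _ 2 _ ?m])
  then have "G' = W1' * (B * (transpose_mat W1 * G * W1) * transpose_mat B) * transpose_mat W1'"
    using orthogonal_congruence_inverse[OF w1'(1,2) G'] by (simp add: E1 E1')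
  also have "\<dots> = (W1' * B * transpose_mat W1) * G * (W1 * transpose_mat B * transpose_mat W1')"
    using w1 w1' b G by (simp add: as)
  also have "W1 * transpose_mat B * transpose_mat W1' = transpose_mat (W1' * B * transpose_mat W1)"
  proof -
    have "transpose_mat (W1' * B * transpose_mat W1) = W1 * transpose_mat (W1' * B)"
      using w1 w1' b by (subst transpose_mult[of _ ?n ?n]) auto
    also have "transpose_mat (W1' * B) = transpose_mat B * transpose_mat W1'"
      using w1'(1) b(1) by (rule transpose_mult)
    finally show ?thesis using w1 w1' b by (simp add: as)
  qed
  finally show ?thesis
    using SpO_mult[OF SpO_mult[OF W1' B] SpO_transpose[OF W1]] by blast
qed

section \<open>Antipodal pairing of the spectrum\<close>

definition antipodal_pure :: "real list \<Rightarrow> nat \<Rightarrow> bool" where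
  "antipodal_pure L k \<longleftrightarrow> L ! k * L ! (length L - 1 - k) = 1"

definition at_most_one_impure :: "real list \<Rightarrow> bool" where
  "at_most_one_impure L \<longleftrightarrow> (\<forall>k l. k < length L div 2 \<longrightarrow> l < length L div 2 \<longrightarrow> k \<noteq> l \<longrightarrow> antipodal_pure L k \<or> antipodal_pure L l)"

lemma prod_list_map_nth: "prod_list (map f xs) = (\<Prod>i<length xs. f (xs ! i) :: 'a :: comm_monoid_mult)"
  by (simp add: prod.list_conv_set_nth atLeast0LessThan)

text \<open>\<open>\<sigma>\<close> enumerates increasingly the positions of a list of length \<open>m + 2\<close> other than \<open>p\<close>
  and \<open>q\<close>; it commutes with the antipodal involutions \<open>j \<mapsto> m - 1 - j\<close> and \<open>i \<mapsto> m + 1 - i\<close>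
  and maps the first half into the first half, so antipodal pairs survive the deletion.\<close>
locale pair_deletion =
  fixes m p q :: nat and \<sigma> :: "nat \<Rightarrow> nat"
  assumes sigma_strict_mono: "\<And>i j. i < j \<Longrightarrow> j < m \<Longrightarrow> \<sigma> i < \<sigma> j"
    and sigma_image: "\<sigma> ` {..<m} = {..<m+2} - {p,q}"
    and pq: "p \<noteq> q" "p < m + 2" "q < m + 2"
    and sigma_antipodal: "\<And>j. j < m \<Longrightarrow> \<sigma> (m - 1 - j) = m + 1 - \<sigma> j"
    and sigma_first_half: "\<And>j. j < m div 2 \<Longrightarrow> \<sigma> j < (m + 2) div 2"
begin

definition remaining :: "real list \<Rightarrow> real list" where "remaining L = map (\<lambda>j. L ! \<sigma> j) [0..<m]"

lemma remaining_length[simp]: "length (remaining L) = m" by (simp add: remaining_def)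

lemma remaining_nth: "j < m \<Longrightarrow> remaining L ! j = L ! \<sigma> j" by (simp add: remaining_def)

lemma inj_on_sigma: "inj_on \<sigma> {..<m}"
proof (rule inj_onI)
  fix i j assume "i \<in> {..<m}" "j \<in> {..<m}" "\<sigma> i = \<sigma> j"
  thus "i = j" using sigma_strict_mono[of i j] sigma_strict_mono[of j i] by (cases i j rule: linorder_cases) auto
qed

lemma remaining_prod:
  fixes f :: "real \<Rightarrow> 'a :: comm_monoid_mult"
  assumes len: "length L = m + 2"
  shows "prod_list (map f L) = f (L ! p) * (f (L ! q) * prod_list (map f (remaining L)))"
proof -
  have "prod_list (map f L) = (\<Prod>i<m+2. f (L ! i))" unfolding prod_list_map_nth len ..
  also have "{..<m+2} = insert p (insert q ({..<m+2} - {p,q}))" using pq by auto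
  also have "(\<Prod>i\<in>insert p (insert q ({..<m+2} - {p,q})). f (L ! i)) =
     f (L ! p) * (f (L ! q) * (\<Prod>i\<in>{..<m+2} - {p,q}. f (L ! i)))"
    using pq by (simp add: prod.insert_remove insert_Diff_if)
  also have "(\<Prod>i\<in>{..<m+2} - {p,q}. f (L ! i)) = (\<Prod>i\<in>\<sigma> ` {..<m}. f (L ! i))" unfolding sigma_image ..
  also have "\<dots> = (\<Prod>j<m. f (L ! \<sigma> j))" by (subst prod.reindex[OF inj_on_sigma], simp)
  also have "\<dots> = prod_list (map f (remaining L))" unfolding prod_list_map_nth remaining_length
    by (rule prod.cong, auto simp: remaining_nth)
  finally show ?thesis .
qed

lemma remaining_sorted:
  assumes s: "sorted_wrt (\<ge>) L" and len: "length L = m + 2"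
  shows "sorted_wrt (\<ge>) (remaining L)"
proof -
  have "\<sigma> j < m + 2" if "j < m" for j using sigma_image that by auto
  then show ?thesis using s len sigma_strict_mono unfolding sorted_wrt_iff_nth_less
    by (auto simp: remaining_nth)
qed

lemma remaining_antipodal_pure:
  assumes len: "length L = m + 2" and j: "j < m" and a: "antipodal_pure L (\<sigma> j)"
  shows "antipodal_pure (remaining L) j"
proof -
  have "remaining L ! (m - 1 - j) = L ! (m + 1 - \<sigma> j)" using j sigma_antipodal[OF j] by (simp add: remaining_nth)
  thus ?thesis using a len j unfolding antipodal_pure_def by (simp add: remaining_nth)
qed

lemma remaining_at_most_one_impure:
  assumes len: "length L = m + 2" and g: "at_most_one_impure L"
  shows "at_most_one_impure (remaining L)"
  unfolding at_most_one_impure_def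
proof (intro allI impI)
  fix k l assume k: "k < length (remaining L) div 2" and l: "l < length (remaining L) div 2" and kl: "k \<noteq> l"
  have km: "k < m" and lm: "l < m" using k l by auto
  have "\<sigma> k \<noteq> \<sigma> l" using inj_on_sigma kl km lm unfolding inj_on_def by blast
  moreover have "\<sigma> k < length L div 2" "\<sigma> l < length L div 2" using sigma_first_half k l len by auto
  ultimately have "antipodal_pure L (\<sigma> k) \<or> antipodal_pure L (\<sigma> l)" using g unfolding at_most_one_impure_def by blast
  thus "antipodal_pure (remaining L) k \<or> antipodal_pure (remaining L) l" using remaining_antipodal_pure[OF len] km lm by blast
qed

end

lemma pair_deletion_outer: "pair_deletion m 0 (m+1) Suc"
proof
  show "Suc ` {..<m} = {..<m + 2} - {0, m + 1}"
  proof
    show "Suc ` {..<m} \<subseteq> {..<m + 2} - {0, m + 1}" by auto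
    show "{..<m + 2} - {0, m + 1} \<subseteq> Suc ` {..<m}"
    proof
      fix x assume x: "x \<in> {..<m + 2} - {0, m + 1}"
      hence "x = Suc (x - 1)" "x - 1 < m" by auto
      thus "x \<in> Suc ` {..<m}" by blast
    qed
  qed
qed auto

lemma pair_deletion_inner:
  assumes m: "m \<ge> 2"
  shows "pair_deletion m 1 m (\<lambda>j. if j = 0 then 0 else if j = m - 1 then m + 1 else j + 1)"
    (is "pair_deletion m 1 m ?s")
proof
  show "?s ` {..<m} = {..<m + 2} - {1, m}"
  proof
    show "?s ` {..<m} \<subseteq> {..<m + 2} - {1, m}" using m by auto
    show "{..<m + 2} - {1, m} \<subseteq> ?s ` {..<m}"
    proof
      fix x assume "x \<in> {..<m + 2} - {1, m}"
      then show "x \<in> ?s ` {..<m}" using m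
        by (intro image_eqI[of _ _ "if x = 0 then 0 else if x = m + 1 then m - 1 else x - 1"]) auto
    qed
  qed
qed (use m in auto)

lemma perfect_matching_partner:
  assumes M: "perfect_matching L M" and v: "v < length L"
  shows "\<exists>w. w < length L \<and> w \<noteq> v \<and> {v, w} \<in> M \<and> L ! v * L ! w \<ge> 1"
proof -
  obtain e where e: "e \<in> M" "v \<in> e" using M v unfolding perfect_matching_def by blast
  have "lam_edge L e" using M e unfolding perfect_matching_def by blast
  then obtain i j where ij: "e = {i,j}" "i < j" "j < length L" "L ! i * L ! j \<ge> 1" unfolding lam_edge_def by blast
  show ?thesis
  proof (cases "v = i")
    case True thus ?thesis using ij e by (intro exI[of _ j]) auto
  next
    case False
    hence "v = j" using e ij by auto
    thus ?thesis using ij e by (intro exI[of _ i]) (auto simp: insert_commute mult.commute)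
  qed
qed

lemma perfect_matching_partner_unique:
  assumes M: "perfect_matching L M" and w: "w < length L"
    and vw: "{v, w} \<in> M" and v'w: "{v', w} \<in> M" and "v \<noteq> w" and "v' \<noteq> w"
  shows "v = v'"
proof -
  have "\<exists>!e. e \<in> M \<and> w \<in> e" using M w unfolding perfect_matching_def by blast
  then have "{v, w} = {v', w}" using vw v'w by blast
  then show ?thesis using assms(5,6) by (auto simp: doubleton_eq_iff)
qed

text \<open>Pigeonhole: if \<open>\<lambda>\<^sub>k \<lambda>\<^sub>2\<^sub>S\<^sub>-\<^sub>1\<^sub>-\<^sub>k < 1\<close>, each of the \<open>k + 1\<close> smallest eigenvalues needs a partner
  among the \<open>k\<close> largest ones.\<close>
lemma perfect_matching_antipodal_ge_1:
  assumes M: "perfect_matching L M" and len: "length L = 2 * S"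
    and sorted: "sorted_wrt (\<ge>) L" and pos: "\<And>i. i < length L \<Longrightarrow> L ! i > 0" and k: "k < S"
  shows "L ! k * L ! (2*S - 1 - k) \<ge> 1"
proof (rule ccontr)
  assume neg: "\<not> ?thesis"
  define n where "n = 2 * S"
  define B where "B = {n - 1 - k..<n}"
  have "\<forall>v \<in> B. \<exists>w. w < n \<and> w \<noteq> v \<and> {v, w} \<in> M \<and> L ! v * L ! w \<ge> 1"
    using perfect_matching_partner[OF M] len unfolding B_def n_def by auto
  then obtain f where f: "\<And>v. v \<in> B \<Longrightarrow> f v < n \<and> f v \<noteq> v \<and> {v, f v} \<in> M \<and> L ! v * L ! f v \<ge> 1"
    by metis
  have sle: "L ! j \<le> L ! i" if "i \<le> j" "j < n" for i j
    using sorted that len unfolding n_def by (cases "i = j") (auto simp: sorted_wrt_iff_nth_less)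
  have fk: "f v < k" if v: "v \<in> B" for v
  proof (rule ccontr)
    assume "\<not> f v < k"
    hence fvk: "k \<le> f v" by simp
    have vn: "v < n" "n - 1 - k \<le> v" using v unfolding B_def by auto
    have kn: "k < n" "n - 1 - k < n" using k unfolding n_def by auto
    have "L ! v * L ! f v \<le> L ! (n - 1 - k) * L ! k"
    proof (rule mult_mono)
      show "L ! v \<le> L ! (n - 1 - k)" using sle[OF vn(2) vn(1)] .
      show "L ! f v \<le> L ! k" using sle[OF fvk] f[OF v] by simp
      show "0 \<le> L ! (n - 1 - k)" using pos kn len unfolding n_def by (simp add: less_imp_le)
      show "0 \<le> L ! f v" using pos f[OF v] len unfolding n_def by (simp add: less_imp_le)
    qed
    also have "\<dots> < 1" using neg unfolding n_def by (simp add: mult.commute)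
    finally show False using f[OF v] by simp
  qed
  have inj: "inj_on f B"
  proof (rule inj_onI)
    fix v v' assume v: "v \<in> B" and v': "v' \<in> B" and eq: "f v = f v'"
    show "v = v'"
      using perfect_matching_partner_unique[OF M, of "f v" v v'] f[OF v] f[OF v'] eq len
      unfolding n_def by simp
  qed
  have "card B \<le> card {..<k}"
    by (rule card_inj_on_le[OF inj], insert fk, auto)
  moreover have "card B = k + 1" unfolding B_def n_def using k by simp
  ultimately show False by simp
qed

definition antipodal_edge :: "nat \<Rightarrow> nat \<Rightarrow> nat set" where "antipodal_edge n k = {k, n - 1 - k}"

lemma antipodal_edge_inj: "inj_on (antipodal_edge (2*S)) {..<S}"
proof (rule inj_onI)
  fix k l assume k: "k \<in> {..<S}" and l: "l \<in> {..<S}" and e: "antipodal_edge (2*S) k = antipodal_edge (2*S) l"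
  hence "k \<in> {l, 2*S - 1 - l}" unfolding antipodal_edge_def by auto
  thus "k = l" using k l by auto
qed

lemma card_antipodal_edges: "card (antipodal_edge (2*S) ` {..<S}) = S"
  using card_image[OF antipodal_edge_inj] by simp

lemma antipodal_perfect_matching:
  assumes len: "length L = 2 * S" and ge: "\<And>k. k < S \<Longrightarrow> L ! k * L ! (2*S - 1 - k) \<ge> 1"
  shows "perfect_matching L (antipodal_edge (2*S) ` {..<S})"
  unfolding perfect_matching_def
proof (intro conjI ballI allI impI)
  fix e assume "e \<in> antipodal_edge (2*S) ` {..<S}"
  then obtain k where k: "k < S" and e: "e = {k, 2*S - 1 - k}" unfolding antipodal_edge_def by auto
  show "lam_edge L e" unfolding lam_edge_def using k e ge[OF k] len
    by (intro exI[of _ k] exI[of _ "2*S - 1 - k"]) auto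
next
  fix v assume v: "v < length L"
  define k where "k = (if v < S then v else 2*S - 1 - v)"
  have k: "k < S" "v \<in> antipodal_edge (2*S) k" using v len unfolding k_def antipodal_edge_def by auto
  show "\<exists>!e. e \<in> antipodal_edge (2*S) ` {..<S} \<and> v \<in> e"
  proof (rule ex1I[of _ "antipodal_edge (2*S) k"])
    show "antipodal_edge (2*S) k \<in> antipodal_edge (2*S) ` {..<S} \<and> v \<in> antipodal_edge (2*S) k" using k by auto
    fix e assume "e \<in> antipodal_edge (2*S) ` {..<S} \<and> v \<in> e"
    then obtain l where l: "l < S" "e = antipodal_edge (2*S) l" "v \<in> antipodal_edge (2*S) l" by auto
    have "l = k" using l v len unfolding k_def antipodal_edge_def by auto
    thus "e = antipodal_edge (2*S) k" using l by simp
  qed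
qed

lemma antipodal_pure_if_pure_edge:
  assumes len: "length L = 2 * S" and k: "k < S" and p: "pure_edge L (antipodal_edge (2*S) k)"
  shows "antipodal_pure L k"
proof -
  obtain i j where ij: "{k, 2*S - 1 - k} = {i,j}" "i < j" "L ! i * L ! j = 1"
    using p unfolding pure_edge_def antipodal_edge_def by blast
  have "k < 2*S - 1 - k" using k by simp
  hence "i = k" "j = 2*S - 1 - k" using ij by (auto simp: doubleton_eq_iff)
  thus ?thesis using ij len unfolding antipodal_pure_def by simp
qed

lemma pure_edge_permutes:
  assumes \<pi>: "\<pi> permutes {0..<length L}" and val: "\<And>i. i < length L \<Longrightarrow> L ! (\<pi> i) = L ! i"
    and p: "pure_edge L e"
  shows "pure_edge L (\<pi> ` e)"
proof -
  obtain i j where ij: "e = {i,j}" "i < j" "j < length L" "L ! i * L ! j = 1"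
    using p unfolding pure_edge_def by blast
  have pi: "\<pi> i < length L" "\<pi> j < length L" using ij \<pi> by (auto simp: permutes_in_image)
  have ne: "\<pi> i \<noteq> \<pi> j" using ij permutes_inj[OF \<pi>] by (auto simp: inj_eq)
  have vals: "L ! \<pi> i * L ! \<pi> j = 1" using val ij by simp
  have img: "\<pi> ` e = {\<pi> i, \<pi> j}" using ij by simp
  show ?thesis
  proof (cases "\<pi> i < \<pi> j")
    case True thus ?thesis unfolding pure_edge_def img using pi vals
      by (intro exI[of _ "\<pi> i"] exI[of _ "\<pi> j"]) auto
  next
    case False
    hence "\<pi> j < \<pi> i" using ne by simp
    thus ?thesis unfolding pure_edge_def img using pi vals
      by (intro exI[of _ "\<pi> j"] exI[of _ "\<pi> i"]) (auto simp: insert_commute mult.commute)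
  qed
qed

lemma unique_pairing_card_pure_edges:
  assumes up: "unique_pairing L" and M: "perfect_matching L M" and M': "perfect_matching L M'"
  shows "card {e \<in> M. pure_edge L e} \<le> card {e \<in> M'. pure_edge L e}"
proof -
  obtain \<pi> where \<pi>: "\<pi> permutes {0..<length L}" and val: "\<forall>i < length L. L ! (\<pi> i) = L ! i"
    and img: "(\<lambda>e. \<pi> ` e) ` M = M'"
    using up M M' unfolding unique_pairing_def by blast
  have "M' \<subseteq> Pow {..<length L}"
  proof
    fix e assume "e \<in> M'"
    then have "lam_edge L e" using M' unfolding perfect_matching_def by blast
    then obtain i j where "e = {i,j}" "i < j" "j < length L" unfolding lam_edge_def by blast
    then show "e \<in> Pow {..<length L}" by auto
  qed
  then have "finite M'" by (rule finite_subset) simp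
  then have "finite {e \<in> M'. pure_edge L e}" by simp
  moreover have "inj_on (\<lambda>e. \<pi> ` e) {e \<in> M. pure_edge L e}"
    using permutes_inj[OF \<pi>] by (auto simp: inj_on_def inj_image_eq_iff)
  moreover have "(\<lambda>e. \<pi> ` e) ` {e \<in> M. pure_edge L e} \<subseteq> {e \<in> M'. pure_edge L e}"
    using img pure_edge_permutes[OF \<pi>] val by blast
  ultimately show ?thesis by (intro card_inj_on_le)
qed

lemma t_pure_unique_pairing_at_most_one_impure:
  assumes tp: "t_pure_unique_pairing (S - 1) L" and len: "length L = 2 * S"
    and sorted: "sorted_wrt (\<ge>) L" and pos: "\<And>i. i < length L \<Longrightarrow> L ! i > 0"
  shows "at_most_one_impure L"
  unfolding at_most_one_impure_def
proof (intro allI impI)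
  let ?A = "antipodal_edge (2*S) ` {..<S}"
  fix k l assume "k < length L div 2" and "l < length L div 2" and kl: "k \<noteq> l"
  then have kS: "k < S" and lS: "l < S" using len by auto
  obtain M where M: "perfect_matching L M" and pure: "card {e \<in> M. pure_edge L e} \<ge> S - 1"
    using tp unfolding t_pure_unique_pairing_def by blast
  have "perfect_matching L ?A"
    using antipodal_perfect_matching[OF len] perfect_matching_antipodal_ge_1[OF M len sorted pos] by blast
  then have cA: "S - 1 \<le> card {e \<in> ?A. pure_edge L e}"
    using unique_pairing_card_pure_edges[OF _ M] tp pure unfolding t_pure_unique_pairing_def
    by (meson le_trans)
  show "antipodal_pure L k \<or> antipodal_pure L l"
  proof (rule ccontr)
    assume "\<not> (antipodal_pure L k \<or> antipodal_pure L l)"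
    then have "{e \<in> ?A. pure_edge L e} \<subseteq> ?A - {antipodal_edge (2*S) k, antipodal_edge (2*S) l}"
      using antipodal_pure_if_pure_edge[OF len kS] antipodal_pure_if_pure_edge[OF len lS] by auto
    then have "card {e \<in> ?A. pure_edge L e} \<le> card (?A - {antipodal_edge (2*S) k, antipodal_edge (2*S) l})"
      by (intro card_mono) auto
    also have "\<dots> = S - 2"
      using card_antipodal_edges[of S] antipodal_edge_inj[of S] kS lS kl
      by (simp add: card_Diff_subset inj_on_eq_iff)
    finally show False using cA kS lS kl by linarith
  qed
qed

lemma (in pair_deletion) split_off_deleted_pair:
  assumes m: "m = 2*S" and len: "length Lam = m + 2"
    and Q: "uncertainty_CM (Suc S) X" and cp: "char_poly X = (\<Prod>l \<leftarrow> Lam. [:- l, 1:])"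
    and a: "symplectic_eigenpair (Suc S) X (Lam ! p) (Lam ! q) a"
  shows "\<exists>W \<in> SpO (Suc S). \<exists>G1. G1 \<in> carrier_mat m m \<and>
      transpose_mat W * X * W = block_diag (mat_diag 2 ((!) [Lam ! p, Lam ! q])) G1 \<and>
      uncertainty_CM S G1 \<and> char_poly G1 = (\<Prod>l \<leftarrow> remaining Lam. [:- l, 1:])"
proof -
  obtain W G1 where "W \<in> SpO (Suc S)" and "G1 \<in> carrier_mat m m"
    and "transpose_mat W * X * W = block_diag (mat_diag 2 ((!) [Lam ! p, Lam ! q])) G1"
    and "uncertainty_CM S G1" and cp1: "char_poly X = [:- Lam ! p, 1:] * ([:- Lam ! q, 1:] * char_poly G1)"
    using split_off_mode[OF Q a] m by blast
  moreover have "char_poly G1 = (\<Prod>l \<leftarrow> remaining Lam. [:- l, 1:])"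
    using cp1 cp remaining_prod[OF len, of "\<lambda>l. [:- l, 1:]"] by (simp del: mult_pCons_left)
  ultimately show ?thesis by blast
qed

section \<open>Induction on the number of modes\<close>

lemma uncertainty_CM_orthogonal_diagonalization:
  assumes Q: "uncertainty_CM S G" and cp: "char_poly G = (\<Prod>l \<leftarrow> Lam. [:- l, 1:])"
  shows "\<exists>U. orthogonal_diagonalization (2*S) G U Lam"
proof -
  note q = uncertainty_CM_D[OF Q]
  obtain U where "U \<in> carrier_mat (2*S) (2*S)" "transpose_mat U * U = 1\<^sub>m (2*S)"
    "transpose_mat U * G * U = mat_diag (2*S) ((!) Lam)"
    using spectral_theorem_real_symmetric[OF q(1,2) cp] by blast
  then show ?thesis
    using q(1) length_char_poly_roots[OF q(1) cp] by (intro exI[of _ U]) unfold_locales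
qed

lemma exists_pair_deletion_with_symplectic_eigenpairs:
  assumes len: "length Lam = 2 * Suc S" and sorted: "sorted_wrt (\<ge>) Lam"
    and impure: "at_most_one_impure Lam"
  shows "\<exists>p q \<sigma>. pair_deletion (2*S) p q \<sigma> \<and>
    (\<forall>X. uncertainty_CM (Suc S) X \<longrightarrow> char_poly X = (\<Prod>l \<leftarrow> Lam. [:- l, 1:]) \<longrightarrow>
       (\<exists>a. symplectic_eigenpair (Suc S) X (Lam ! p) (Lam ! q) a))"
proof (cases "S = 0 \<or> antipodal_pure Lam 0")
  case True
  have "\<exists>a. symplectic_eigenpair (Suc S) X (Lam ! 0) (Lam ! (2*S+1)) a"
    if Q: "uncertainty_CM (Suc S) X" and cp: "char_poly X = (\<Prod>l \<leftarrow> Lam. [:- l, 1:])" for X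
  proof -
    obtain U where "orthogonal_diagonalization (2 * Suc S) X U Lam"
      using uncertainty_CM_orthogonal_diagonalization[OF Q cp] by blast
    then interpret orthogonal_diagonalization "2 * Suc S" X U Lam .
    show ?thesis
    proof (cases "S = 0")
      case True
      then show ?thesis using symplectic_eigenpair_single_mode by simp
    next
      case False
      then have "Lam ! 0 * Lam ! (2 * Suc S - 1) = 1"
        using \<open>S = 0 \<or> antipodal_pure Lam 0\<close> len unfolding antipodal_pure_def by simp
      then show ?thesis using symplectic_eigenpair_outer[OF refl Q sorted] by simp
    qed
  qed
  then show ?thesis using pair_deletion_outer[of "2*S"] by fastforce
next
  case False
  then have S: "S \<ge> 1" and impure0: "\<not> antipodal_pure Lam 0" by auto
  have "1 < length Lam div 2" using len S by simp
  then have "antipodal_pure Lam 0 \<or> antipodal_pure Lam 1"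
    using impure[unfolded at_most_one_impure_def, rule_format, of 0 1] by simp
  with impure0 have "antipodal_pure Lam 1" by simp
  then have pure: "Lam ! 1 * Lam ! (2 * Suc S - 2) = 1" using len unfolding antipodal_pure_def by simp
  have "\<exists>a. symplectic_eigenpair (Suc S) X (Lam ! 1) (Lam ! (2*S)) a"
    if Q: "uncertainty_CM (Suc S) X" and cp: "char_poly X = (\<Prod>l \<leftarrow> Lam. [:- l, 1:])" for X
  proof -
    obtain U where "orthogonal_diagonalization (2 * Suc S) X U Lam"
      using uncertainty_CM_orthogonal_diagonalization[OF Q cp] by blast
    then interpret orthogonal_diagonalization "2 * Suc S" X U Lam .
    show ?thesis using symplectic_eigenpair_inner[OF refl Q sorted _ pure] S by simp
  qed
  then show ?thesis using pair_deletion_inner[of "2*S"] S by fastforce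
qed

theorem SpO_congruent_if_at_most_one_impure:
  assumes "uncertainty_CM S G" and "uncertainty_CM S G'"
    and "char_poly G = (\<Prod>l \<leftarrow> Lam. [:- l, 1:])" and "char_poly G' = (\<Prod>l \<leftarrow> Lam. [:- l, 1:])"
    and "sorted_wrt (\<ge>) Lam" and "at_most_one_impure Lam"
  shows "\<exists>W \<in> SpO S. G' = W * G * transpose_mat W"
  using assms
proof (induct S arbitrary: G G' Lam)
  case 0
  then have "G \<in> carrier_mat 0 0" "G' \<in> carrier_mat 0 0" using uncertainty_CM_D(1) by fastforce+
  then show ?case using SpO_one[of 0] by (intro bexI[of _ "1\<^sub>m 0"]) (auto intro!: eq_matI)
next
  case (Suc S G G' Lam)
  note Q = Suc(2) and Q' = Suc(3) and cp = Suc(4) and cp' = Suc(5)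
  have len: "length Lam = 2*S + 2"
    using length_char_poly_roots[OF uncertainty_CM_D(1)[OF Q] cp] by simp
  obtain p q \<sigma> where del: "pair_deletion (2*S) p q \<sigma>" and pairs: "\<And>X. uncertainty_CM (Suc S) X \<Longrightarrow>
      char_poly X = (\<Prod>l \<leftarrow> Lam. [:- l, 1:]) \<Longrightarrow> \<exists>a. symplectic_eigenpair (Suc S) X (Lam ! p) (Lam ! q) a"
    using exists_pair_deletion_with_symplectic_eigenpairs[OF _ Suc(6,7)] len by auto
  interpret pair_deletion "2*S" p q \<sigma> by (rule del)
  obtain W1 G1 where W1: "W1 \<in> SpO (Suc S)" and G1: "G1 \<in> carrier_mat (2*S) (2*S)"
    and E1: "transpose_mat W1 * G * W1 = block_diag (mat_diag 2 ((!) [Lam ! p, Lam ! q])) G1"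
    and Q1: "uncertainty_CM S G1" and cp1: "char_poly G1 = (\<Prod>l \<leftarrow> remaining Lam. [:- l, 1:])"
    using split_off_deleted_pair[OF refl len Q cp] pairs[OF Q cp] by blast
  obtain W1' G1' where W1': "W1' \<in> SpO (Suc S)"
    and E1': "transpose_mat W1' * G' * W1' = block_diag (mat_diag 2 ((!) [Lam ! p, Lam ! q])) G1'"
    and Q1': "uncertainty_CM S G1'" and cp1': "char_poly G1' = (\<Prod>l \<leftarrow> remaining Lam. [:- l, 1:])"
    using split_off_deleted_pair[OF refl len Q' cp'] pairs[OF Q' cp'] by blast
  obtain W2 where W2: "W2 \<in> SpO S" and E2: "G1' = W2 * G1 * transpose_mat W2"
    using Suc(1)[OF Q1 Q1' cp1 cp1' remaining_sorted[OF Suc(6)] remaining_at_most_one_impure[OF _ Suc(7)]]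
      len by auto
  show ?case
    by (rule SpO_congruent_of_block_diag[OF W1 W1' W2 mat_diag_dim G1 _ _ E1 E1' E2])
      (use uncertainty_CM_D(1)[OF Q] uncertainty_CM_D(1)[OF Q'] in auto)
qed

theorem theorem1:
  fixes S :: nat and G G' :: "real mat" and Lam :: "real list"
  assumes "S \<ge> 1"
    and "quantum_CM S G" and "quantum_CM S G'"
    and "eigenspectrum S G Lam" and "eigenspectrum S G' Lam"
    and "t_pure_unique_pairing (S - 1) Lam"
  shows "\<exists>W \<in> SpO S. G' = W * G * transpose_mat W"
proof -
  have Q: "uncertainty_CM S G" and Q': "uncertainty_CM S G'"
    using assms(2,3) quantum_CM_imp_uncertainty_CM by auto
  have len: "length Lam = 2*S" and sorted: "sorted_wrt (\<ge>) Lam"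
    and cp: "char_poly G = (\<Prod>l \<leftarrow> Lam. [:- l, 1:])" and cp': "char_poly G' = (\<Prod>l \<leftarrow> Lam. [:- l, 1:])"
    using assms(4,5) unfolding eigenspectrum_def by auto
  obtain U where "orthogonal_diagonalization (2*S) G U Lam"
    using uncertainty_CM_orthogonal_diagonalization[OF Q cp] by blast
  then have pos: "\<And>i. i < length Lam \<Longrightarrow> Lam ! i > 0"
    using orthogonal_diagonalization.eigenvalue_pos uncertainty_CM_D(3)[OF Q] len by metis
  have "at_most_one_impure Lam"
    by (rule t_pure_unique_pairing_at_most_one_impure[OF assms(6) len sorted pos])
  then show ?thesis by (rule SpO_congruent_if_at_most_one_impure[OF Q Q' cp cp' sorted])
qed

end
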